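(* Let $\varphi$ be a computable forecasting system. Then a path $\omega\in\Omega$ is Martin-Löf test random for $\varphi$ if and only if it is uniformly random for the class of probability measures $\mathcal M_\varphi=\{\mu_{\psi}:\psi\text{ precise forecasting system with }\psi(s)\in\varphi(s)\text{ for all }s\in\mathbb S\}$.
   Context: Notation: $\mathbb N_0=\{0,1,2,\dots\}$; $\Omega=\{0,1\}^{\mathbb N}$ with the Cantor topology and Borel $\sigma$-algebra; $\mathbb S=\bigcup_{n}\{0,1\}^n$ finite binary strings, $\square$ the empty string, $|s|$ length, $s^k$ the prefix of length $k$ and $s_{k}$ the $k$-th entry of $s$, $\omega^n$ the first $n$ entries of $\omega$. $[s]=\{\omega:\omega^{|s|}=s\}$, $[A]=\bigcup_{s\in A}[s]$; for $A\subseteq\mathbb N_0\times\mathbb S$, $A_n=\{s:(n,s)\in A\}$, and for $B\subseteq\mathbb Q\times\mathbb S$, $B_r=\{s:(r,s)\in B\}$. $\mathcal I$: nonempty closed subintervals of $[0,1]$; $\overline E_I(f)=\max_{p\in I}[pf(1)+(1-p)f(0)]$. A forecasting system is $\varphi:\mathbb S\to\mathcal I$, $\underline\varphi=\min\varphi$, $\overline\varphi=\max\varphi$; precise if $\underline\varphi=\overline\varphi$ (identified with a map $\mathbb S\to[0,1]$). Supermartingale for $\varphi$: $M:\mathbb S\to\mathbb R$ with $\overline E_{\varphi(s)}(M(s\,\cdot))\le M(s)$ for all $s$. $\overline P_\varphi(G)=\inf\{M(\square):M\text{ supermartingale for }\varphi,\ \liminf_nM(\omega^n)\ge\mathbb 1_G(\omega)\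 \forall\omega\}$. Computability: recursive maps, recursive/recursively enumerable sets as usual; a real map $r$ on a countable encoded set is computable if there is a recursive rational $q$ with $|r(d)-q(d,N)|\le2^{-N}$; $\varphi$ is computable if $\underline\varphi,\overline\varphi$ are computable. A Martin-Löf test for $\varphi$ is a recursively enumerable $A\subseteq\mathbb N_0\times\mathbb S$ with $\overline P_\varphi([A_n])\le2^{-n}$ for all $n$; $\omega$ is Martin-Löf test random for $\varphi$ if $\omega\notin\bigcap_n[A_n]$ for every such $A$. For a precise forecasting system $\psi$, $\mu_\psi$ is the unique Borel probability measure on $\Omega$ with $\mu_\psi([s])=\prod_{k=0}^{|s|-1}\psi(s^k)^{s_{k+1}}(1-\psi(s^k))^{1-s_{k+1}}$ for all $s$. For a class $\mathcal C$ of Borel probability measures on $\Omega$, a $\mathcal C$-test is a map $\tau:\Omega\to[0,\infty]$ such that there is a recursively enumerable $B\subseteq\mathbb Q\times\mathbb S$ with $\{\omega:\tau(\omega)>r\}=[B_r]$ for all $r\in\mathbb Q$, and $\int\tau\,d\mu\le1$ for all $\mu\in\mathcal C$. A path $\omega$ is uniformly random for $\mathcal C$ if $\tau(\omega)<\infty$ for every $\mathcal C$-test $\tau$. *)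

theory Defs
  imports "HOL-Probability.Probability" "HOL-Library.Nat_Bijection"
begin

text \<open>Finite binary strings are bool lists (True = 1, False = 0); paths are
  functions nat => bool, where omega 0 is the first entry.  The string s^k is
  take k s and the k-th entry s_k (1-indexed) is s ! (k - 1).\<close>

definition prefix :: "(nat \<Rightarrow> bool) \<Rightarrow> nat \<Rightarrow> bool list" where
  "prefix \<omega> n = map \<omega> [0..<n]"

definition cyl :: "bool list \<Rightarrow> (nat \<Rightarrow> bool) set" where
  "cyl s = {\<omega>. prefix \<omega> (length s) = s}"

definition cyl_union :: "bool list set \<Rightarrow> (nat \<Rightarrow> bool) set" where
  "cyl_union A = (\<Union>s\<in>A. cyl s)"

definition section_nat :: "(nat \<times> bool list) set \<Rightarrow> nat \<Rightarrow> bool list set" where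
  "section_nat A n = {s. (n, s) \<in> A}"

definition section_rat :: "(rat \<times> bool list) set \<Rightarrow> rat \<Rightarrow> bool list set" where
  "section_rat B r = {s. (r, s) \<in> B}"

text \<open>Cantor space with its Borel sigma-algebra (= product sigma-algebra of
  countably many copies of the discrete space {0,1}).\<close>

definition cantor :: "(nat \<Rightarrow> bool) measure" where
  "cantor = Pi\<^sub>M UNIV (\<lambda>_. count_space UNIV)"

definition borel_prob :: "(nat \<Rightarrow> bool) measure \<Rightarrow> bool" where
  "borel_prob \<mu> \<longleftrightarrow> sets \<mu> = sets cantor \<and> prob_space \<mu>"

definition interval01 :: "real set \<Rightarrow> bool" where
  "interval01 I \<longleftrightarrow> (\<exists>a b. 0 \<le> a \<and> a \<le> b \<and> b \<le> 1 \<and> I = {a..b})"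

definition forecasting_system :: "(bool list \<Rightarrow> real set) \<Rightarrow> bool" where
  "forecasting_system \<phi> \<longleftrightarrow> (\<forall>s. interval01 (\<phi> s))"

definition lower_fs :: "(bool list \<Rightarrow> real set) \<Rightarrow> bool list \<Rightarrow> real" where
  "lower_fs \<phi> s = Inf (\<phi> s)"

definition upper_fs :: "(bool list \<Rightarrow> real set) \<Rightarrow> bool list \<Rightarrow> real" where
  "upper_fs \<phi> s = Sup (\<phi> s)"

text \<open>Precise forecasting systems are identified with maps into [0,1].\<close>
definition precise_fs :: "(bool list \<Rightarrow> real) \<Rightarrow> bool" where
  "precise_fs \<psi> \<longleftrightarrow> (\<forall>s. 0 \<le> \<psi> s \<and> \<psi> s \<le> 1)"

definition upper_exp :: "real set \<Rightarrow> (bool \<Rightarrow> real) \<Rightarrow> real" where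
  "upper_exp I f = Sup ((\<lambda>p. p * f True + (1 - p) * f False) ` I)"

definition supermartingale :: "(bool list \<Rightarrow> real set) \<Rightarrow> (bool list \<Rightarrow> real) \<Rightarrow> bool" where
  "supermartingale \<phi> M \<longleftrightarrow> (\<forall>s. upper_exp (\<phi> s) (\<lambda>b. M (s @ [b])) \<le> M s)"

definition upper_prob :: "(bool list \<Rightarrow> real set) \<Rightarrow> (nat \<Rightarrow> bool) set \<Rightarrow> ereal" where
  "upper_prob \<phi> G = (INF M \<in> {M. supermartingale \<phi> M \<and>
      (\<forall>\<omega>. ereal (indicator G \<omega>) \<le> liminf (\<lambda>n. ereal (M (prefix \<omega> n))))}. ereal (M []))"

datatype recf = Zero | Succ | Proj nat | Comp recf "recf list" | Prim recf recf | Mini recf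

inductive eval_recf :: "recf \<Rightarrow> nat list \<Rightarrow> nat \<Rightarrow> bool" where
  zero: "eval_recf Zero xs 0"
| succ: "eval_recf Succ (x # xs) (Suc x)"
| proj: "i < length xs \<Longrightarrow> eval_recf (Proj i) xs (xs ! i)"
| comp: "list_all2 (\<lambda>g y. eval_recf g xs y) gs ys \<Longrightarrow> eval_recf f ys z \<Longrightarrow>
         eval_recf (Comp f gs) xs z"
| prim0: "eval_recf g xs y \<Longrightarrow> eval_recf (Prim g h) (0 # xs) y"
| primS: "eval_recf (Prim g h) (n # xs) r \<Longrightarrow> eval_recf h (n # r # xs) y \<Longrightarrow>
          eval_recf (Prim g h) (Suc n # xs) y"
| mini: "eval_recf f (n # xs) 0 \<Longrightarrow> (\<forall>m<n. \<exists>k. eval_recf f (m # xs) (Suc k)) \<Longrightarrow>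
         eval_recf (Mini f) xs n"
monos list_all2_mono

definition code_str :: "bool list \<Rightarrow> nat" where
  "code_str s = list_encode (map (\<lambda>b. if b then 1 else 0) s)"

definition code_rat :: "rat \<Rightarrow> nat" where
  "code_rat q = prod_encode (int_encode (fst (quotient_of q)), nat (snd (quotient_of q)))"

definition re_nat_str :: "(nat \<times> bool list) set \<Rightarrow> bool" where
  "re_nat_str A \<longleftrightarrow> (\<exists>f. \<forall>n s. (n, s) \<in> A \<longleftrightarrow> (\<exists>y. eval_recf f [n, code_str s] y))"

definition re_rat_str :: "(rat \<times> bool list) set \<Rightarrow> bool" where
  "re_rat_str B \<longleftrightarrow> (\<exists>f. \<forall>r s. (r, s) \<in> B \<longleftrightarrow> (\<exists>y. eval_recf f [code_rat r, code_str s] y))"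

definition computable_real_str :: "(bool list \<Rightarrow> real) \<Rightarrow> bool" where
  "computable_real_str r \<longleftrightarrow> (\<exists>q :: bool list \<Rightarrow> nat \<Rightarrow> rat.
      (\<exists>f. \<forall>s N. eval_recf f [code_str s, N] (code_rat (q s N))) \<and>
      (\<forall>s N. \<bar>r s - real_of_rat (q s N)\<bar> \<le> (1/2) ^ N))"

definition computable_fs :: "(bool list \<Rightarrow> real set) \<Rightarrow> bool" where
  "computable_fs \<phi> \<longleftrightarrow> computable_real_str (lower_fs \<phi>) \<and> computable_real_str (upper_fs \<phi>)"

definition MLtest :: "(bool list \<Rightarrow> real set) \<Rightarrow> (nat \<times> bool list) set \<Rightarrow> bool" where
  "MLtest \<phi> A \<longleftrightarrow> re_nat_str A \<and>
     (\<forall>n. upper_prob \<phi> (cyl_union (section_nat A n)) \<le> ereal ((1/2) ^ n))"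

definition MLtest_random :: "(bool list \<Rightarrow> real set) \<Rightarrow> (nat \<Rightarrow> bool) \<Rightarrow> bool" where
  "MLtest_random \<phi> \<omega> \<longleftrightarrow>
     (\<forall>A. MLtest \<phi> A \<longrightarrow> \<omega> \<notin> (\<Inter>n. cyl_union (section_nat A n)))"

definition is_mu_of :: "(bool list \<Rightarrow> real) \<Rightarrow> (nat \<Rightarrow> bool) measure \<Rightarrow> bool" where
  "is_mu_of \<psi> \<mu> \<longleftrightarrow> borel_prob \<mu> \<and>
     (\<forall>s. measure \<mu> (cyl s) =
        (\<Prod>k<length s. if s ! k then \<psi> (take k s) else 1 - \<psi> (take k s)))"

definition M_class :: "(bool list \<Rightarrow> real set) \<Rightarrow> (nat \<Rightarrow> bool) measure set" where
  "M_class \<phi> = {\<mu>. \<exists>\<psi>. precise_fs \<psi> \<and> (\<forall>s. \<psi> s \<in> \<phi> s) \<and> is_mu_of \<psi> \<mu>}"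

definition C_test :: "(nat \<Rightarrow> bool) measure set \<Rightarrow> ((nat \<Rightarrow> bool) \<Rightarrow> ennreal) \<Rightarrow> bool" where
  "C_test C \<tau> \<longleftrightarrow>
     (\<exists>B. re_rat_str B \<and>
        (\<forall>r. {\<omega>. ereal (real_of_rat r) < enn2ereal (\<tau> \<omega>)} = cyl_union (section_rat B r))) \<and>
     (\<forall>\<mu>\<in>C. (\<integral>\<^sup>+ \<omega>. \<tau> \<omega> \<partial>\<mu>) \<le> 1)"

definition uniformly_random :: "(nat \<Rightarrow> bool) measure set \<Rightarrow> (nat \<Rightarrow> bool) \<Rightarrow> bool" where
  "uniformly_random C \<omega> \<longleftrightarrow> (\<forall>\<tau>. C_test C \<tau> \<longrightarrow> \<tau> \<omega> < \<infinity>)"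

end

theory Submission
  imports Defs
begin

text \<open>
  Both directions rest on a duality for unions of cylinders \<open>[S]\<close>: the upper probability of
  \<open>[S]\<close> under \<open>\<phi>\<close> is the supremum of \<open>\<mu>\<^sub>\<psi>([S])\<close> over the precise \<open>\<psi>\<close> compatible with
  \<open>\<phi>\<close>. A supermartingale for \<open>\<phi>\<close> is one for every compatible \<open>\<psi>\<close>, so Fatou's lemma bounds
  \<open>\<mu>\<^sub>\<psi>(G)\<close> by its initial value. Conversely, the backward-induction value of reaching \<open>S\<close>
  before a horizon \<open>H\<close> is attained by the compatible forecast that always picks an endpoint of
  \<open>\<phi> s\<close>, and these values increase to a supermartingale witnessing the upper probability.
  Given the duality, a uniform test \<open>\<tau>\<close> yields the Martin-Loef test formed by its level sets
  \<open>{\<tau> > 2\<^sup>n}\<close>, and a Martin-Loef test \<open>A\<close> yields the uniform test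
  \<open>sup\<^sub>n n \<cdot> 1\<^bsub>[A\<^sub>2\<^sub>n]\<^esub>\<close>; the rest is checking that both transformations are effective.
\<close>

section \<open>Partial recursive functions\<close>

inductive_cases eval_recf_ZeroE: "eval_recf Zero xs y"
inductive_cases eval_recf_SuccE: "eval_recf Succ xs y"
inductive_cases eval_recf_ProjE: "eval_recf (Proj i) xs y"
inductive_cases eval_recf_CompE: "eval_recf (Comp f gs) xs y"
inductive_cases eval_recf_PrimE: "eval_recf (Prim g h) xs y"
inductive_cases eval_recf_MiniE: "eval_recf (Mini f) xs y"

lemma eval_recf_deterministic:
  "eval_recf f xs y \<Longrightarrow> eval_recf f xs y' \<Longrightarrow> y = y'"
proof (induction arbitrary: y' rule: eval_recf.induct)
  case (comp xs gs ys f z)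
  from comp.prems obtain ys' where
    args: "list_all2 (\<lambda>g y. eval_recf g xs y) gs ys'" and "eval_recf f ys' y'"
    by (auto elim: eval_recf_CompE)
  have "ys = ys'" using comp.IH(1) args
    by (induction gs arbitrary: ys ys') (auto simp: list_all2_Cons1)
  with comp.IH(2) \<open>eval_recf f ys' y'\<close> show ?case by blast
next
  case (prim0 g xs y h)
  from prim0.prems have "eval_recf g xs y'" by (rule eval_recf_PrimE) auto
  with prim0.IH show ?case by blast
next
  case (primS g h n xs r y)
  from primS.prems obtain r' where "eval_recf (Prim g h) (n # xs) r'" "eval_recf h (n # r' # xs) y'"
    by (auto elim: eval_recf_PrimE)
  with primS.IH show ?case by blast
next
  case (mini f n xs)
  from mini.prems obtain n' where n': "eval_recf f (n' # xs) 0"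
      "\<forall>m<n'. \<exists>k. eval_recf f (m # xs) (Suc k)" "y' = n'"
    by (auto elim: eval_recf_MiniE)
  show ?case
  proof (cases n n' rule: linorder_cases)
    case less
    with n' mini.IH(1) show ?thesis by blast
  next
    case greater
    with mini.IH(2) n'(1) show ?thesis by fastforce
  qed (use n' in simp)
qed (auto elim: eval_recf_ZeroE eval_recf_SuccE eval_recf_ProjE)

lemma eval_recf_Comp_iff:
  assumes "list_all2 (\<lambda>g y. eval_recf g xs y) gs ys"
  shows "eval_recf (Comp f gs) xs z \<longleftrightarrow> eval_recf f ys z"
proof
  assume "eval_recf (Comp f gs) xs z"
  then obtain ys' where ys': "list_all2 (\<lambda>g y. eval_recf g xs y) gs ys'" "eval_recf f ys' z"
    by (auto elim: eval_recf_CompE)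
  have "ys' = ys" using ys'(1) assms
    by (induction gs arbitrary: ys ys') (auto simp: list_all2_Cons1 dest: eval_recf_deterministic)
  with ys'(2) show "eval_recf f ys z" by simp
qed (rule eval_recf.comp[OF assms])

definition recf_halts :: "recf \<Rightarrow> nat list \<Rightarrow> bool" where
  "recf_halts f xs \<longleftrightarrow> (\<exists>y. eval_recf f xs y)"

lemma recf_halts_Comp_iff:
  "list_all2 (\<lambda>g y. eval_recf g xs y) gs ys \<Longrightarrow> recf_halts (Comp f gs) xs \<longleftrightarrow> recf_halts f ys"
  by (simp add: recf_halts_def eval_recf_Comp_iff)

lemma recf_halts_Comp_Zero_iff:
  "recf_halts (Comp Zero [f, g]) xs \<longleftrightarrow> recf_halts f xs \<and> recf_halts g xs"
  by (auto simp: recf_halts_def list_all2_Cons1 intro!: eval_recf.comp eval_recf.zero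
      elim!: eval_recf_CompE)

lemma recf_halts_Prim_Suc0_iff:
  assumes "eval_recf g xs r"
  shows "recf_halts (Prim g h) (Suc 0 # xs) \<longleftrightarrow> recf_halts h (0 # r # xs)"
  using assms eval_recf.prim0[OF assms]
  by (auto simp: recf_halts_def intro: eval_recf.primS elim!: eval_recf_PrimE
      dest: eval_recf_deterministic)

lemma recf_halts_Prim_0: "eval_recf g xs r \<Longrightarrow> recf_halts (Prim g h) (0 # xs)"
  unfolding recf_halts_def by (blast intro: eval_recf.prim0)

lemma eval_recf_Comp1:
  "eval_recf g1 xs y1 \<Longrightarrow> eval_recf f [y1] z \<Longrightarrow> eval_recf (Comp f [g1]) xs z"
  by (rule eval_recf.comp[where ys="[y1]"]) auto

lemma eval_recf_Comp2:
  "eval_recf g1 xs y1 \<Longrightarrow> eval_recf g2 xs y2 \<Longrightarrow> eval_recf f [y1, y2] z \<Longrightarrow>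
   eval_recf (Comp f [g1, g2]) xs z"
  by (rule eval_recf.comp[where ys="[y1, y2]"]) auto

lemma eval_recf_Comp3:
  "eval_recf g1 xs y1 \<Longrightarrow> eval_recf g2 xs y2 \<Longrightarrow> eval_recf g3 xs y3 \<Longrightarrow>
   eval_recf f [y1, y2, y3] z \<Longrightarrow> eval_recf (Comp f [g1, g2, g3]) xs z"
  by (rule eval_recf.comp[where ys="[y1, y2, y3]"]) auto

lemma eval_recf_Proj: "i < length xs \<Longrightarrow> y = xs ! i \<Longrightarrow> eval_recf (Proj i) xs y"
  using eval_recf.proj by simp

lemma eval_recf_Zero: "y = 0 \<Longrightarrow> eval_recf Zero xs y"
  using eval_recf.zero by simp

lemma eval_recf_Succ: "y = Suc x \<Longrightarrow> eval_recf Succ [x] y"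
  using eval_recf.succ by simp

lemma eval_recf_Prim_upto:
  assumes "eval_recf g xs (F 0)"
    and "\<And>n. n < N \<Longrightarrow> eval_recf h (n # F n # xs) (F (Suc n))"
    and "n \<le> N"
  shows "eval_recf (Prim g h) (n # xs) (F n)"
  using assms(3)
proof (induction n)
  case 0
  show ?case using assms(1) by (rule eval_recf.prim0)
next
  case (Suc n)
  then show ?case using assms(2)[of n] by (intro eval_recf.primS) auto
qed

lemma eval_recf_Prim:
  "eval_recf g xs (F 0) \<Longrightarrow> (\<And>n. eval_recf h (n # F n # xs) (F (Suc n))) \<Longrightarrow>
   eval_recf (Prim g h) (n # xs) (F n)"
  by (rule eval_recf_Prim_upto[where N = n]) auto

lemma eval_recf_Mini:
  "eval_recf f (n # xs) 0 \<Longrightarrow> (\<And>m. m < n \<Longrightarrow> eval_recf f (m # xs) (Suc (F m))) \<Longrightarrow>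
   eval_recf (Mini f) xs n"
  by (intro eval_recf.mini) auto

fun const_recf :: "nat \<Rightarrow> recf" where
  "const_recf 0 = Zero"
| "const_recf (Suc n) = Comp Succ [const_recf n]"

lemma eval_const_recf: "eval_recf (const_recf n) xs n"
  by (induction n) (auto intro: eval_recf_Zero eval_recf_Comp1 eval_recf_Succ)

declare const_recf.simps [simp del]

definition "add_recf = Prim (Proj 0) (Comp Succ [Proj 1])"

lemma eval_add_recf: "y = n + x \<Longrightarrow> eval_recf add_recf [n, x] y"
  unfolding add_recf_def
  by (hypsubst, rule eval_recf_Prim[where F = "\<lambda>n. n + x"])
    (auto intro!: eval_recf_Proj eval_recf_Comp1 eval_recf_Succ)

definition "mult_recf = Prim Zero (Comp add_recf [Proj 1, Proj 2])"

lemma eval_mult_recf: "y = n * x \<Longrightarrow> eval_recf mult_recf [n, x] y"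
  unfolding mult_recf_def
  by (hypsubst, rule eval_recf_Prim[where F = "\<lambda>n. n * x"])
    (auto intro!: eval_recf_Proj eval_recf_Zero eval_recf_Comp2 eval_add_recf)

definition "pred_recf = Prim Zero (Proj 0)"

lemma eval_pred_recf: "y = n - 1 \<Longrightarrow> eval_recf pred_recf [n] y"
  unfolding pred_recf_def
  by (hypsubst, rule eval_recf_Prim[where F = "\<lambda>n. n - 1" and xs = "[]"])
    (auto intro!: eval_recf_Proj eval_recf_Zero)

definition "diff_recf = Prim (Proj 0) (Comp pred_recf [Proj 1])"

lemma eval_diff_recf: "z = x - y \<Longrightarrow> eval_recf diff_recf [y, x] z"
  unfolding diff_recf_def
  by (hypsubst, rule eval_recf_Prim[where F = "\<lambda>n. x - n" and xs = "[x]"])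
    (auto intro!: eval_recf_Proj eval_recf_Comp1 eval_pred_recf)

definition "sg_recf = Prim Zero (const_recf 1)"

lemma eval_sg_recf: "y = min n 1 \<Longrightarrow> eval_recf sg_recf [n] y"
  unfolding sg_recf_def
  by (hypsubst, rule eval_recf_Prim[where F = "\<lambda>n. min n 1" and xs = "[]"])
    (auto intro!: eval_recf_Zero eval_const_recf)

definition "neg_sg_recf = Comp diff_recf [Comp sg_recf [Proj 0], const_recf 1]"

lemma eval_neg_sg_recf: "y = 1 - min n 1 \<Longrightarrow> eval_recf neg_sg_recf [n] y"
  unfolding neg_sg_recf_def
  by (auto intro!: eval_recf_Comp2 eval_recf_Comp1 eval_diff_recf eval_sg_recf eval_recf_Proj
      eval_const_recf)

definition "less_recf = Comp sg_recf [Comp diff_recf [Proj 0, Proj 1]]"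

lemma eval_less_recf: "z = of_bool (x < y) \<Longrightarrow> eval_recf less_recf [x, y] z"
  unfolding less_recf_def
  by (auto intro!: eval_recf_Comp2 eval_recf_Comp1 eval_diff_recf eval_sg_recf eval_recf_Proj)

definition "parity_recf = Prim Zero (Comp neg_sg_recf [Proj 1])"

lemma eval_parity_recf: "y = n mod 2 \<Longrightarrow> eval_recf parity_recf [n] y"
  unfolding parity_recf_def
  by (hypsubst, rule eval_recf_Prim[where F = "\<lambda>n. n mod 2" and xs = "[]"])
    (auto intro!: eval_recf_Zero eval_recf_Comp1 eval_neg_sg_recf eval_recf_Proj simp: mod_Suc)

definition "pow2_recf = Prim (const_recf 1) (Comp add_recf [Proj 1, Proj 1])"

lemma eval_pow2_recf: "y = 2 ^ n \<Longrightarrow> eval_recf pow2_recf [n] y"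
  unfolding pow2_recf_def
  by (hypsubst, rule eval_recf_Prim[where F = "\<lambda>n. 2 ^ n" and xs = "[]"])
    (auto intro!: eval_const_recf eval_recf_Comp2 eval_add_recf eval_recf_Proj)

lemma recf_halts_Mini_flag_iff:
  assumes "\<And>m. eval_recf g (m # xs) v" and "v \<le> 1"
  shows "recf_halts (Mini (Comp neg_sg_recf [g])) xs \<longleftrightarrow> v = 1"
proof
  assume "recf_halts (Mini (Comp neg_sg_recf [g])) xs"
  then obtain n where "eval_recf (Comp neg_sg_recf [g]) (n # xs) 0"
    unfolding recf_halts_def by (auto elim: eval_recf_MiniE)
  then have "eval_recf neg_sg_recf [v] 0"
    using eval_recf_Comp_iff[where gs = "[g]" and ys = "[v]"] assms(1) by simp
  with eval_neg_sg_recf[OF refl, of v] have "1 - min v 1 = 0"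
    by (blast dest: eval_recf_deterministic)
  with assms(2) show "v = 1" by simp
next
  assume "v = 1"
  then have "eval_recf (Mini (Comp neg_sg_recf [g])) xs 0"
    using assms(1) by (intro eval_recf_Mini) (auto intro!: eval_recf_Comp1 eval_neg_sg_recf)
  then show "recf_halts (Mini (Comp neg_sg_recf [g])) xs" by (auto simp: recf_halts_def)
qed

definition "triangle_recf = Prim Zero (Comp add_recf [Proj 1, Comp Succ [Proj 0]])"

lemma eval_triangle_recf: "y = triangle n \<Longrightarrow> eval_recf triangle_recf [n] y"
  unfolding triangle_recf_def
  by (hypsubst, rule eval_recf_Prim[where F = "triangle" and xs = "[]"])
    (auto intro!: eval_recf_Zero eval_recf_Comp2 eval_recf_Comp1 eval_add_recf eval_recf_Succ
      eval_recf_Proj simp: triangle_Suc)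

definition "prod_encode_recf = Comp add_recf [Comp triangle_recf [Comp add_recf [Proj 0, Proj 1]], Proj 0]"

lemma eval_prod_encode_recf: "y = prod_encode (a, b) \<Longrightarrow> eval_recf prod_encode_recf [a, b] y"
  unfolding prod_encode_recf_def prod_encode_def
  by (auto intro!: eval_recf_Comp2 eval_recf_Comp1 eval_add_recf eval_triangle_recf eval_recf_Proj)

lemma prod_decode_eq_triangle:
  "prod_decode z = (a, b) \<Longrightarrow> z = triangle (a + b) + a"
  using prod_decode_inverse[of z] by (simp add: prod_encode_def)

lemma snd_prod_decode_le: "snd (prod_decode z) \<le> z"
proof -
  obtain a b where ab: "prod_decode z = (a, b)" by fastforce
  have "m \<le> triangle m" for m by (induction m) (auto simp: triangle_Suc)
  then have "b \<le> triangle (a + b)" by (meson le_add2 order_trans)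
  with prod_decode_eq_triangle[OF ab] ab show ?thesis by simp
qed

text \<open>The diagonal \<open>a + b\<close> of \<open>z = prod_encode (a, b)\<close> is the least \<open>m\<close> with
  \<open>z < triangle (m + 1)\<close>.\<close>

definition "diagonal_recf =
  Mini (Comp neg_sg_recf [Comp less_recf [Proj 1, Comp triangle_recf [Comp Succ [Proj 0]]]])"

lemma eval_diagonal_recf:
  assumes "prod_decode z = (a, b)" "y = a + b"
  shows "eval_recf diagonal_recf [z] y"
proof -
  have z: "z = triangle (a + b) + a" using prod_decode_eq_triangle[OF assms(1)] .
  have triangle_mono: "triangle m \<le> triangle n" if "m \<le> n" for m n
    using that unfolding triangle_def by (intro div_le_mono mult_le_mono) auto
  show ?thesis unfolding diagonal_recf_def assms(2)
  proof (rule eval_recf_Mini[where F = "\<lambda>_. 0"])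
    show "eval_recf (Comp neg_sg_recf [Comp less_recf [Proj 1, Comp triangle_recf [Comp Succ [Proj 0]]]])
        [a + b, z] 0"
      by (auto intro!: eval_recf_Comp1 eval_recf_Comp2 eval_neg_sg_recf eval_less_recf eval_recf_Proj
          eval_triangle_recf eval_recf_Succ simp: z triangle_Suc)
  next
    fix m assume "m < a + b"
    then have "\<not> z < triangle (Suc m)" using z triangle_mono[of "Suc m" "a + b"] by simp
    then show "eval_recf (Comp neg_sg_recf [Comp less_recf [Proj 1, Comp triangle_recf [Comp Succ [Proj 0]]]])
        [m, z] (Suc 0)"
      by (auto intro!: eval_recf_Comp1 eval_recf_Comp2 eval_neg_sg_recf eval_less_recf eval_recf_Proj
          eval_triangle_recf eval_recf_Succ)
  qed
qed

definition "prod_fst_recf = Comp diff_recf [Comp triangle_recf [diagonal_recf], Proj 0]"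
definition "prod_snd_recf = Comp diff_recf [prod_fst_recf, diagonal_recf]"

lemma eval_prod_fst_recf: "y = fst (prod_decode z) \<Longrightarrow> eval_recf prod_fst_recf [z] y"
proof -
  assume y: "y = fst (prod_decode z)"
  obtain a b where ab: "prod_decode z = (a, b)" by fastforce
  have "eval_recf (Comp triangle_recf [diagonal_recf]) [z] (triangle (a + b))"
    by (intro eval_recf_Comp1[OF eval_diagonal_recf[OF ab refl]] eval_triangle_recf) simp
  with y ab prod_decode_eq_triangle[OF ab] show ?thesis
    unfolding prod_fst_recf_def by (auto intro!: eval_recf_Comp2 eval_recf_Proj eval_diff_recf)
qed

lemma eval_prod_snd_recf: "y = snd (prod_decode z) \<Longrightarrow> eval_recf prod_snd_recf [z] y"
proof -
  assume y: "y = snd (prod_decode z)"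
  obtain a b where ab: "prod_decode z = (a, b)" by fastforce
  with y show ?thesis
    unfolding prod_snd_recf_def
    by (auto intro!: eval_recf_Comp2 eval_prod_fst_recf eval_diagonal_recf[OF ab] eval_diff_recf)
qed

lemma code_str_Nil [simp]: "code_str [] = 0"
  by (simp add: code_str_def)

lemma code_str_Cons [simp]: "code_str (b # s) = Suc (prod_encode (of_bool b, code_str s))"
  by (simp add: code_str_def)

definition code_hd :: "nat \<Rightarrow> nat" where "code_hd c = fst (prod_decode (c - 1))"
definition code_tl :: "nat \<Rightarrow> nat" where "code_tl c = snd (prod_decode (c - 1))"

lemma code_hd_Suc_prod_encode [simp]: "code_hd (Suc (prod_encode (a, c))) = a"
  by (simp add: code_hd_def)

lemma code_tl_code_str [simp]: "code_tl (code_str s) = code_str (tl s)"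
proof (cases s)
  case Nil
  have "prod_decode 0 = (0, 0)" using prod_encode_inverse[of "(0, 0)"] by (simp add: prod_encode_def)
  with Nil show ?thesis by (simp add: code_tl_def)
qed (simp add: code_tl_def)

lemma funpow_code_tl_code_str: "(code_tl ^^ i) (code_str s) = code_str (drop i s)"
  by (induction i arbitrary: s) (simp_all add: funpow_Suc_right drop_Suc del: funpow.simps)

definition "code_tl_recf = Comp prod_snd_recf [Comp pred_recf [Proj 0]]"
definition "code_hd_recf = Comp prod_fst_recf [Comp pred_recf [Proj 0]]"
definition "code_drop_recf = Prim (Proj 0) (Comp code_tl_recf [Proj 1])"

lemma eval_code_tl_recf: "y = code_tl c \<Longrightarrow> eval_recf code_tl_recf [c] y"
  unfolding code_tl_recf_def code_tl_def
  by (auto intro!: eval_recf_Comp1 eval_prod_snd_recf eval_pred_recf eval_recf_Proj)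

lemma eval_code_hd_recf: "y = code_hd c \<Longrightarrow> eval_recf code_hd_recf [c] y"
  unfolding code_hd_recf_def code_hd_def
  by (auto intro!: eval_recf_Comp1 eval_prod_fst_recf eval_pred_recf eval_recf_Proj)

lemma eval_code_drop_recf: "y = code_str (drop i s) \<Longrightarrow> eval_recf code_drop_recf [i, code_str s] y"
  unfolding code_drop_recf_def funpow_code_tl_code_str[symmetric]
  by (hypsubst, rule eval_recf_Prim[where F = "\<lambda>i. (code_tl ^^ i) (code_str s)"])
    (auto intro!: eval_recf_Proj eval_recf_Comp1 eval_code_tl_recf)

definition "length_recf = Mini (Comp sg_recf [code_drop_recf])"

lemma eval_length_recf: "y = length s \<Longrightarrow> eval_recf length_recf [code_str s] y"
  unfolding length_recf_def
proof (hypsubst, rule eval_recf_Mini[where F = "\<lambda>_. 0"])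
  show "eval_recf (Comp sg_recf [code_drop_recf]) [length s, code_str s] 0"
    by (auto intro!: eval_recf_Comp1 eval_sg_recf eval_code_drop_recf)
  fix m assume "m < length s"
  then obtain b t where "drop m s = b # t" by (cases "drop m s") auto
  then show "eval_recf (Comp sg_recf [code_drop_recf]) [m, code_str s] (Suc 0)"
    by (auto intro!: eval_recf_Comp1 eval_sg_recf eval_code_drop_recf)
qed

definition "nth_recf = Comp code_hd_recf [code_drop_recf]"

lemma eval_nth_recf: "i < length s \<Longrightarrow> y = of_bool (s ! i) \<Longrightarrow> eval_recf nth_recf [i, code_str s] y"
  unfolding nth_recf_def
  by (auto intro!: eval_recf_Comp1 eval_code_drop_recf eval_code_hd_recf
      simp: Cons_nth_drop_Suc[symmetric])

text \<open>\<open>take k s\<close> is assembled from the back: after \<open>j\<close> steps the accumulator is the code of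
  \<open>drop (k - j) (take k s)\<close>.\<close>

definition "take_step_recf =
  Comp Succ [Comp prod_encode_recf [Comp nth_recf [Comp diff_recf [Comp Succ [Proj 0], Proj 2], Proj 3], Proj 1]]"

definition "take_recf = Comp (Prim Zero take_step_recf) [Proj 0, Proj 0, Proj 1]"

lemma drop_take_Suc_diff:
  assumes "n < k" "k \<le> length s"
  shows "drop (k - Suc n) (take k s) = s ! (k - Suc n) # drop (k - n) (take k s)"
proof -
  have "k - Suc n < length (take k s)" using assms by simp
  from Cons_nth_drop_Suc[OF this] assms show ?thesis
    by (simp add: Suc_diff_Suc)
qed

lemma eval_take_recf:
  assumes "k \<le> length s" "y = code_str (take k s)"
  shows "eval_recf take_recf [k, code_str s] y"
proof -
  let ?F = "\<lambda>j. code_str (drop (k - j) (take k s))"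
  have "eval_recf (Prim Zero take_step_recf) [k, k, code_str s] (?F k)"
  proof (rule eval_recf_Prim_upto[where N = k and F = ?F])
    fix n assume "n < k"
    let ?xs = "[n, ?F n, k, code_str s]"
    have "eval_recf (Comp diff_recf [Comp Succ [Proj 0], Proj 2]) ?xs (k - Suc n)"
      by (auto intro!: eval_recf_Comp2 eval_recf_Comp1 eval_diff_recf eval_recf_Succ eval_recf_Proj)
    then have entry: "eval_recf (Comp nth_recf [Comp diff_recf [Comp Succ [Proj 0], Proj 2], Proj 3]) ?xs
        (of_bool (s ! (k - Suc n)))"
      using \<open>n < k\<close> assms(1) by (intro eval_recf_Comp2[OF _ eval_recf_Proj eval_nth_recf]) auto
    show "eval_recf take_step_recf ?xs (?F (Suc n))"
      unfolding take_step_recf_def drop_take_Suc_diff[OF \<open>n < k\<close> assms(1)] code_str_Cons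
      by (rule eval_recf_Comp1[OF eval_recf_Comp2[OF entry eval_recf_Proj eval_prod_encode_recf[OF refl]]
            eval_recf_Succ]) simp_all
  qed (auto intro: eval_recf_Zero)
  with assms show ?thesis
    unfolding take_recf_def by (auto intro!: eval_recf_Comp3 eval_recf_Proj)
qed

lemma real_of_rat_less_nat_iff:
  assumes "quotient_of r = (a, d)"
  shows "real_of_rat r < real n \<longleftrightarrow> int_encode a < 2 * n * nat d \<or> odd (int_encode a)"
proof -
  have d: "d > 0" using quotient_of_denom_pos[OF assms] .
  have "real_of_rat r = real_of_int a / real_of_int d"
    using quotient_of_div[OF assms] by (simp add: of_rat_divide)
  then have "real_of_rat r < real n \<longleftrightarrow> real_of_int a < real_of_int (int n * d)"
    using d by (simp add: divide_less_eq)
  then have less_iff: "real_of_rat r < real n \<longleftrightarrow> a < int n * d"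
    by (simp only: of_int_less_iff)
  show ?thesis
  proof (cases "0 \<le> a")
    case True
    then have "int_encode a = 2 * nat a" by (simp add: int_encode_def sum_encode_def)
    moreover have "a < int n * d \<longleftrightarrow> nat a < n * nat d"
      using True d by (metis nat_0_le of_nat_less_iff of_nat_mult less_le)
    ultimately show ?thesis using less_iff by simp
  next
    case False
    then have "odd (int_encode a)" by (simp add: int_encode_def sum_encode_def)
    moreover have "a < int n * d" using False d by (smt (verit) mult_nonneg_nonneg of_nat_0_le_iff)
    ultimately show ?thesis using less_iff by simp
  qed
qed

text \<open>The first component of \<open>code_rat r\<close> is \<open>int_encode a\<close> for the reduced numerator \<open>a\<close>:
  it equals \<open>2 a\<close> if \<open>a \<ge> 0\<close> and is odd if \<open>a < 0\<close>.\<close>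

definition rat_less_flag :: "nat \<Rightarrow> nat \<Rightarrow> nat" where
  "rat_less_flag c n =
     min (of_bool (fst (prod_decode c) < 2 * n * snd (prod_decode c)) + fst (prod_decode c) mod 2) 1"

lemma rat_less_flag_le_1: "rat_less_flag c n \<le> 1"
  by (simp add: rat_less_flag_def)

lemma rat_less_flag_code_rat: "rat_less_flag (code_rat r) n = 1 \<longleftrightarrow> real_of_rat r < real n"
proof -
  obtain a d where "quotient_of r = (a, d)" by fastforce
  then show ?thesis
    by (auto simp: rat_less_flag_def code_rat_def real_of_rat_less_nat_iff odd_iff_mod_2_eq_one)
qed

definition "rat_less_recf =
  Comp sg_recf [Comp add_recf
    [Comp less_recf [Comp prod_fst_recf [Proj 0],
       Comp mult_recf [Comp mult_recf [const_recf 2, Proj 1], Comp prod_snd_recf [Proj 0]]],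
     Comp parity_recf [Comp prod_fst_recf [Proj 0]]]]"

lemma eval_rat_less_recf: "eval_recf rat_less_recf [c, n] (rat_less_flag c n)"
  unfolding rat_less_recf_def rat_less_flag_def
  by (auto intro!: eval_recf_Comp1 eval_recf_Comp2 eval_sg_recf eval_add_recf eval_less_recf
      eval_prod_fst_recf eval_prod_snd_recf eval_mult_recf eval_const_recf eval_parity_recf eval_recf_Proj)

lemma code_rat_pow2: "code_rat ((2::rat) ^ n) = prod_encode (2 * 2 ^ n, 1)"
proof -
  have "quotient_of ((2::rat) ^ n) = (2 ^ n, 1)"
    using quotient_of_rat_of_int[of "2 ^ n"] by simp
  moreover have "int_encode (2 ^ n) = 2 * 2 ^ n"
    by (simp add: int_encode_def sum_encode_def nat_power_eq)
  ultimately show ?thesis by (simp add: code_rat_def)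
qed

definition "code_rat_pow2_recf =
  Comp prod_encode_recf [Comp mult_recf [const_recf 2, Comp pow2_recf [Proj 0]], const_recf 1]"

lemma eval_code_rat_pow2_recf: "eval_recf code_rat_pow2_recf (n # xs) (code_rat ((2::rat) ^ n))"
  unfolding code_rat_pow2_recf_def code_rat_pow2
  by (auto intro!: eval_recf_Comp2 eval_recf_Comp1 eval_prod_encode_recf eval_mult_recf
      eval_const_recf eval_pow2_recf eval_recf_Proj)

lemma re_nat_str_pow2_section:
  assumes "re_rat_str B"
  shows "re_nat_str {(n, s). ((2::rat) ^ n, s) \<in> B}"
proof -
  obtain f where f: "\<And>r s. (r, s) \<in> B \<longleftrightarrow> recf_halts f [code_rat r, code_str s]"
    using assms unfolding re_rat_str_def recf_halts_def by blast
  have "recf_halts (Comp f [code_rat_pow2_recf, Proj 1]) [n, code_str s] \<longleftrightarrow>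
      recf_halts f [code_rat ((2::rat) ^ n), code_str s]" for n s
    by (rule recf_halts_Comp_iff) (auto intro: eval_code_rat_pow2_recf eval_recf_Proj)
  then show ?thesis
    unfolding re_nat_str_def recf_halts_def[symmetric] using f by blast
qed

text \<open>A string \<open>s\<close> of length \<open>prod_encode (n, k)\<close> stands for its prefix of length \<open>k\<close> at
  level \<open>n\<close>. Coding the level into the length lets one set of strings describe every section
  \<open>{\<tau> > r}\<close> of the uniform test built below.\<close>

definition uniform_test_code :: "(nat \<times> bool list) set \<Rightarrow> (rat \<times> bool list) set" where
  "uniform_test_code A = {(r, s). case prod_decode (length s) of (n, k) \<Rightarrow>
     real_of_rat r < real n \<and> (n = 0 \<or> (2 * n, take k s) \<in> A)}"

definition "length_fst_recf = Comp prod_fst_recf [length_recf]"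
definition "take_length_snd_recf = Comp take_recf [Comp prod_snd_recf [length_recf], Proj 0]"

lemma eval_length_fst_recf:
  "prod_decode (length s) = (n, k) \<Longrightarrow> eval_recf length_fst_recf [code_str s] n"
  unfolding length_fst_recf_def by (auto intro!: eval_recf_Comp1 eval_prod_fst_recf eval_length_recf)

lemma eval_take_length_snd_recf:
  assumes "prod_decode (length s) = (n, k)"
  shows "eval_recf take_length_snd_recf [code_str s] (code_str (take k s))"
proof -
  have "k \<le> length s" using snd_prod_decode_le[of "length s"] assms by simp
  with assms show ?thesis
    unfolding take_length_snd_recf_def
    by (auto intro!: eval_recf_Comp1 eval_recf_Comp2 eval_prod_snd_recf eval_length_recf
        eval_take_recf eval_recf_Proj)
qed

definition "rat_guard_recf =
  Mini (Comp neg_sg_recf [Comp rat_less_recf [Proj 1, Comp length_fst_recf [Proj 2]]])"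

definition "level_branch_recf f =
  Comp (Prim Zero (Comp f [Comp mult_recf [const_recf 2, Comp length_fst_recf [Proj 3]],
                           Comp take_length_snd_recf [Proj 3]]))
    [Comp sg_recf [Comp length_fst_recf [Proj 1]], Proj 0, Proj 1]"

definition "uniform_test_recf f = Comp Zero [rat_guard_recf, level_branch_recf f]"

lemma recf_halts_rat_guard_recf_iff:
  assumes "prod_decode (length s) = (n, k)"
  shows "recf_halts rat_guard_recf [code_rat r, code_str s] \<longleftrightarrow> real_of_rat r < real n"
proof -
  have "eval_recf (Comp rat_less_recf [Proj 1, Comp length_fst_recf [Proj 2]])
      [m, code_rat r, code_str s] (rat_less_flag (code_rat r) n)" for m
    using assms by (auto intro!: eval_recf_Comp1 eval_recf_Comp2 eval_rat_less_recf
        eval_length_fst_recf eval_recf_Proj)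
  from recf_halts_Mini_flag_iff[OF this rat_less_flag_le_1] show ?thesis
    unfolding rat_guard_recf_def rat_less_flag_code_rat .
qed

lemma recf_halts_level_branch_recf_iff:
  assumes "prod_decode (length s) = (n, k)"
  shows "recf_halts (level_branch_recf f) [c, code_str s] \<longleftrightarrow>
    n = 0 \<or> recf_halts f [2 * n, code_str (take k s)]"
proof -
  let ?h = "Comp f [Comp mult_recf [const_recf 2, Comp length_fst_recf [Proj 3]],
                    Comp take_length_snd_recf [Proj 3]]"
  have "recf_halts (level_branch_recf f) [c, code_str s] \<longleftrightarrow>
      recf_halts (Prim Zero ?h) [min n 1, c, code_str s]"
    unfolding level_branch_recf_def using assms
    by (intro recf_halts_Comp_iff) (auto intro!: eval_recf_Comp1 eval_sg_recf eval_length_fst_recf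
        eval_recf_Proj)
  also have "\<dots> \<longleftrightarrow> n = 0 \<or> recf_halts f [2 * n, code_str (take k s)]"
  proof (cases "n = 0")
    case False
    then have "min n 1 = Suc 0" by simp
    moreover have "recf_halts ?h [0, 0, c, code_str s] \<longleftrightarrow> recf_halts f [2 * n, code_str (take k s)]"
      using assms by (intro recf_halts_Comp_iff) (auto intro!: eval_recf_Comp1 eval_recf_Comp2
          eval_mult_recf eval_const_recf eval_length_fst_recf eval_take_length_snd_recf eval_recf_Proj)
    ultimately show ?thesis
      using False by (simp add: recf_halts_Prim_Suc0_iff[OF eval_recf_Zero[OF refl]])
  qed (simp add: recf_halts_Prim_0[OF eval_recf_Zero[OF refl]])
  finally show ?thesis .
qed

lemma re_rat_str_uniform_test_code:
  assumes "re_nat_str A"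
  shows "re_rat_str (uniform_test_code A)"
proof -
  obtain f where f: "\<And>n s. (n, s) \<in> A \<longleftrightarrow> recf_halts f [n, code_str s]"
    using assms unfolding re_nat_str_def recf_halts_def by blast
  have "(r, s) \<in> uniform_test_code A \<longleftrightarrow> recf_halts (uniform_test_recf f) [code_rat r, code_str s]"
    for r s
  proof -
    obtain n k where nk: "prod_decode (length s) = (n, k)" by fastforce
    show ?thesis
      unfolding uniform_test_recf_def recf_halts_Comp_Zero_iff recf_halts_rat_guard_recf_iff[OF nk]
        recf_halts_level_branch_recf_iff[OF nk]
      by (simp add: uniform_test_code_def nk f)
  qed
  then show ?thesis unfolding re_rat_str_def recf_halts_def by blast
qed

section \<open>Cylinders\<close>

lemma length_prefix [simp]: "length (prefix \<omega> n) = n"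
  by (simp add: prefix_def)

lemma prefix_0 [simp]: "prefix \<omega> 0 = []"
  by (simp add: prefix_def)

lemma prefix_Suc: "prefix \<omega> (Suc n) = prefix \<omega> n @ [\<omega> n]"
  by (simp add: prefix_def)

lemma take_prefix [simp]: "take k (prefix \<omega> n) = prefix \<omega> (min k n)"
  by (simp add: prefix_def take_map take_upt min_def)

lemma nth_prefix [simp]: "i < n \<Longrightarrow> prefix \<omega> n ! i = \<omega> i"
  by (simp add: prefix_def)

lemma mem_cyl_iff: "\<omega> \<in> cyl s \<longleftrightarrow> prefix \<omega> (length s) = s"
  by (simp add: cyl_def)

lemma cyl_Nil [simp]: "cyl [] = UNIV"
  by (simp add: cyl_def)

lemma cyl_snoc: "cyl s = cyl (s @ [True]) \<union> cyl (s @ [False])"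
  by (auto simp: cyl_def prefix_Suc)

lemma cyl_snoc_disjoint: "cyl (s @ [True]) \<inter> cyl (s @ [False]) = {}"
  by (auto simp: cyl_def prefix_Suc)

lemma cyl_subset_cyl_take:
  assumes "k \<le> length s"
  shows "cyl s \<subseteq> cyl (take k s)"
proof
  fix \<omega> assume "\<omega> \<in> cyl s"
  then have "prefix \<omega> (length s) = s" by (simp add: mem_cyl_iff)
  then have "take k s = prefix \<omega> k" using assms by (metis take_prefix min.absorb1)
  then show "\<omega> \<in> cyl (take k s)" using assms by (simp add: mem_cyl_iff)
qed

lemma space_cantor [simp]: "space cantor = UNIV"
  by (simp add: cantor_def space_PiM)

lemma cyl_eq_INT: "cyl s = (\<Inter>i<length s. {\<omega>. \<omega> i = s ! i})"
proof -
  have "prefix \<omega> (length s) = s \<longleftrightarrow> (\<forall>i<length s. \<omega> i = s ! i)" for \<omega>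
    unfolding prefix_def list_eq_iff_nth_eq by simp
  then show ?thesis unfolding cyl_def by auto
qed

lemma sets_cyl [measurable]: "cyl s \<in> sets cantor"
proof (cases "s = []")
  case False
  have "{\<omega>. \<omega> i = b} \<in> sets cantor" for i b
  proof -
    have "(\<lambda>\<omega>. \<omega> i) \<in> measurable cantor (count_space UNIV)"
      unfolding cantor_def by (rule measurable_component_singleton) simp
    from measurable_sets[OF this, of "{b}"] show ?thesis by (simp add: vimage_def)
  qed
  with False show ?thesis unfolding cyl_eq_INT by (intro sets.finite_INT) auto
qed (simp add: sets.top[of cantor, simplified])

lemma sets_cyl_union [measurable]: "cyl_union A \<in> sets cantor"
  unfolding cyl_union_def by (intro sets.countable_UN') auto

lemma measurable_prefix: "(\<lambda>\<omega>. prefix \<omega> n) \<in> measurable cantor (count_space UNIV)"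
proof (subst measurable_count_space_eq2_countable, safe)
  fix s :: "bool list"
  have "(\<lambda>\<omega>. prefix \<omega> n) -` {s} = (if length s = n then cyl s else {})"
    by (auto simp: cyl_def)
  then show "(\<lambda>\<omega>. prefix \<omega> n) -` {s} \<inter> space cantor \<in> sets cantor" by simp
qed simp

section \<open>Forecasting systems and upper expectation\<close>

lemma forecasting_system_Icc:
  assumes "forecasting_system \<phi>"
  obtains a b where "0 \<le> a" "a \<le> b" "b \<le> 1" "\<phi> s = {a..b}" "lower_fs \<phi> s = a" "upper_fs \<phi> s = b"
proof -
  have "interval01 (\<phi> s)" using assms by (simp add: forecasting_system_def)
  then obtain a b where ab: "0 \<le> a" "a \<le> b" "b \<le> 1" "\<phi> s = {a..b}"
    unfolding interval01_def by blast
  show ?thesis by (rule that[OF ab]) (use ab in \<open>simp_all add: lower_fs_def upper_fs_def\<close>)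
qed

lemma mem_forecasting_system_iff:
  "forecasting_system \<phi> \<Longrightarrow> p \<in> \<phi> s \<longleftrightarrow> lower_fs \<phi> s \<le> p \<and> p \<le> upper_fs \<phi> s"
  by (rule forecasting_system_Icc[of \<phi> s]) simp_all

lemma forecasting_system_bounds:
  assumes "forecasting_system \<phi>"
  shows "0 \<le> lower_fs \<phi> s" "lower_fs \<phi> s \<le> upper_fs \<phi> s" "upper_fs \<phi> s \<le> 1"
  by (rule forecasting_system_Icc[OF assms, of s]; simp)+

lemma forecasting_system_in_01:
  "forecasting_system \<phi> \<Longrightarrow> p \<in> \<phi> s \<Longrightarrow> 0 \<le> p \<and> p \<le> 1"
  using forecasting_system_bounds[of \<phi> s] mem_forecasting_system_iff[of \<phi> p s] by linarith

lemma upper_exp_ge: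
  assumes "forecasting_system \<phi>" "p \<in> \<phi> s"
  shows "p * f True + (1 - p) * f False \<le> upper_exp (\<phi> s) f"
proof -
  have "bdd_above ((\<lambda>p. p * f True + (1 - p) * f False) ` \<phi> s)"
  proof (rule bdd_aboveI2)
    fix q assume "q \<in> \<phi> s"
    then have q: "0 \<le> q" "q \<le> 1" using forecasting_system_in_01[OF assms(1)] by auto
    have "r * z \<le> \<bar>z\<bar>" if "0 \<le> r" "r \<le> 1" for r z :: real
      using that mult_left_mono[OF abs_ge_self[of z], of r] mult_left_le_one_le[of "\<bar>z\<bar>" r] by simp
    then have "q * f True \<le> \<bar>f True\<bar>" "(1 - q) * f False \<le> \<bar>f False\<bar>" using q by simp_all
    then show "q * f True + (1 - q) * f False \<le> \<bar>f True\<bar> + \<bar>f False\<bar>" by linarith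
  qed
  then show ?thesis unfolding upper_exp_def using assms(2) by (rule cSUP_upper2) simp
qed

lemma upper_exp_le:
  assumes "forecasting_system \<phi>" "\<And>p. p \<in> \<phi> s \<Longrightarrow> p * f True + (1 - p) * f False \<le> c"
  shows "upper_exp (\<phi> s) f \<le> c"
proof -
  have "lower_fs \<phi> s \<in> \<phi> s"
    using forecasting_system_bounds[OF assms(1)] mem_forecasting_system_iff[OF assms(1)] by simp
  with assms(2) show ?thesis unfolding upper_exp_def by (intro cSUP_least) auto
qed

lemma upper_exp_mono:
  assumes "forecasting_system \<phi>" "\<And>b. f b \<le> g b"
  shows "upper_exp (\<phi> s) f \<le> upper_exp (\<phi> s) g"
proof (rule upper_exp_le[OF assms(1)])
  fix p assume p: "p \<in> \<phi> s"
  then have "p * f True + (1 - p) * f False \<le> p * g True + (1 - p) * g False"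
    using forecasting_system_in_01[OF assms(1) p] assms(2) by (intro add_mono mult_left_mono) auto
  also have "\<dots> \<le> upper_exp (\<phi> s) g" by (rule upper_exp_ge[OF assms(1) p])
  finally show "p * f True + (1 - p) * f False \<le> upper_exp (\<phi> s) g" .
qed

lemma upper_exp_eq_max_endpoints:
  fixes f :: "bool \<Rightarrow> real"
  assumes "forecasting_system \<phi>"
  defines "E \<equiv> \<lambda>p. p * f True + (1 - p) * f False"
  shows "upper_exp (\<phi> s) f = max (E (lower_fs \<phi> s)) (E (upper_fs \<phi> s))"
proof (rule antisym)
  note bounds = forecasting_system_bounds[OF assms(1), of s]
  note mem = mem_forecasting_system_iff[OF assms(1)]
  have "E p \<le> max (E (lower_fs \<phi> s)) (E (upper_fs \<phi> s))" if "p \<in> \<phi> s" for p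
  proof (cases "f True \<le> f False")
    case True
    with that mem have "p * (f True - f False) \<le> lower_fs \<phi> s * (f True - f False)"
      by (intro mult_right_mono_neg) auto
    then show ?thesis by (simp add: E_def algebra_simps)
  next
    case False
    with that mem have "p * (f True - f False) \<le> upper_fs \<phi> s * (f True - f False)"
      by (intro mult_right_mono) auto
    then show ?thesis by (simp add: E_def algebra_simps)
  qed
  then show "upper_exp (\<phi> s) f \<le> max (E (lower_fs \<phi> s)) (E (upper_fs \<phi> s))"
    unfolding E_def by (rule upper_exp_le[OF assms(1)])
  have "lower_fs \<phi> s \<in> \<phi> s" "upper_fs \<phi> s \<in> \<phi> s" using bounds mem by auto
  then show "max (E (lower_fs \<phi> s)) (E (upper_fs \<phi> s)) \<le> upper_exp (\<phi> s) f"
    unfolding E_def by (auto intro: upper_exp_ge[OF assms(1)])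
qed

section \<open>The measure of a precise forecasting system\<close>

definition cyl_prob :: "(bool list \<Rightarrow> real) \<Rightarrow> bool list \<Rightarrow> real" where
  "cyl_prob \<psi> s = (\<Prod>k<length s. if s ! k then \<psi> (take k s) else 1 - \<psi> (take k s))"

lemma cyl_prob_Nil [simp]: "cyl_prob \<psi> [] = 1"
  by (simp add: cyl_prob_def)

lemma cyl_prob_snoc: "cyl_prob \<psi> (s @ [b]) = cyl_prob \<psi> s * (if b then \<psi> s else 1 - \<psi> s)"
proof -
  have "(\<Prod>k<length s. if (s @ [b]) ! k then \<psi> (take k (s @ [b])) else 1 - \<psi> (take k (s @ [b])))
      = cyl_prob \<psi> s"
    unfolding cyl_prob_def by (rule prod.cong) (auto simp: nth_append)
  then show ?thesis unfolding cyl_prob_def by (simp add: prod.lessThan_Suc)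
qed

lemma cyl_prob_nonneg: "precise_fs \<psi> \<Longrightarrow> 0 \<le> cyl_prob \<psi> s"
  unfolding cyl_prob_def precise_fs_def by (intro prod_nonneg) auto

lemma is_mu_of_measure_cyl: "is_mu_of \<psi> \<mu> \<Longrightarrow> measure \<mu> (cyl s) = cyl_prob \<psi> s"
  by (simp add: is_mu_of_def cyl_prob_def)

lemma is_mu_of_prob_space: "is_mu_of \<psi> \<mu> \<Longrightarrow> prob_space \<mu>"
  by (simp add: is_mu_of_def borel_prob_def)

lemma is_mu_of_sets: "is_mu_of \<psi> \<mu> \<Longrightarrow> sets \<mu> = sets cantor"
  by (simp add: is_mu_of_def borel_prob_def)

text \<open>Existence of \<open>\<mu>\<^sub>\<psi>\<close>: the cylinder of \<open>s\<close> is assigned a subinterval of \<open>[0, 1)\<close> of length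
  \<open>cyl_prob \<psi> s\<close>, split in proportion \<open>\<psi> s\<close> between the two one-symbol extensions, and
  \<open>\<mu>\<^sub>\<psi>\<close> is the image of the uniform distribution under the map sending \<open>x\<close> to the path of
  subintervals containing it.\<close>

fun subinterval_rev :: "(bool list \<Rightarrow> real) \<Rightarrow> bool list \<Rightarrow> real \<times> real" where
  "subinterval_rev \<psi> [] = (0, 1)"
| "subinterval_rev \<psi> (b # r) =
    (let lh = subinterval_rev \<psi> r; c = fst lh + (1 - \<psi> (rev r)) * (snd lh - fst lh)
     in if b then (c, snd lh) else (fst lh, c))"

definition subinterval :: "(bool list \<Rightarrow> real) \<Rightarrow> bool list \<Rightarrow> real \<times> real" where
  "subinterval \<psi> s = subinterval_rev \<psi> (rev s)"

definition split_point :: "(bool list \<Rightarrow> real) \<Rightarrow> bool list \<Rightarrow> real" where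
  "split_point \<psi> s =
     fst (subinterval \<psi> s) + (1 - \<psi> s) * (snd (subinterval \<psi> s) - fst (subinterval \<psi> s))"

lemma subinterval_Nil [simp]: "subinterval \<psi> [] = (0, 1)"
  by (simp add: subinterval_def)

lemma subinterval_snoc:
  "subinterval \<psi> (s @ [b]) =
     (if b then (split_point \<psi> s, snd (subinterval \<psi> s)) else (fst (subinterval \<psi> s), split_point \<psi> s))"
  by (simp add: subinterval_def split_point_def Let_def)

lemma split_point_bounds:
  assumes "precise_fs \<psi>" "fst (subinterval \<psi> s) \<le> snd (subinterval \<psi> s)"
  shows "fst (subinterval \<psi> s) \<le> split_point \<psi> s" "split_point \<psi> s \<le> snd (subinterval \<psi> s)"
proof -
  have "0 \<le> \<psi> s" "\<psi> s \<le> 1" using assms(1) by (auto simp: precise_fs_def)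
  moreover from this assms(2)
  have "(1 - \<psi> s) * (snd (subinterval \<psi> s) - fst (subinterval \<psi> s))
      \<le> 1 * (snd (subinterval \<psi> s) - fst (subinterval \<psi> s))"
    by (intro mult_right_mono) auto
  ultimately show "fst (subinterval \<psi> s) \<le> split_point \<psi> s" "split_point \<psi> s \<le> snd (subinterval \<psi> s)"
    using assms(2) unfolding split_point_def by auto
qed

lemma subinterval_props:
  assumes "precise_fs \<psi>"
  shows "0 \<le> fst (subinterval \<psi> s) \<and> fst (subinterval \<psi> s) \<le> snd (subinterval \<psi> s) \<and>
    snd (subinterval \<psi> s) \<le> 1 \<and> snd (subinterval \<psi> s) - fst (subinterval \<psi> s) = cyl_prob \<psi> s"
proof (induction s rule: rev_induct)
  case (snoc b s)
  then have "fst (subinterval \<psi> s) \<le> split_point \<psi> s" "split_point \<psi> s \<le> snd (subinterval \<psi> s)"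
    using split_point_bounds[OF assms] by blast+
  with snoc show ?case
    by (cases b) (simp_all add: subinterval_snoc cyl_prob_snoc split_point_def algebra_simps)
qed simp

primrec prefix_of_real :: "(bool list \<Rightarrow> real) \<Rightarrow> real \<Rightarrow> nat \<Rightarrow> bool list" where
  "prefix_of_real \<psi> x 0 = []"
| "prefix_of_real \<psi> x (Suc n) = prefix_of_real \<psi> x n @ [split_point \<psi> (prefix_of_real \<psi> x n) \<le> x]"

lemma length_prefix_of_real [simp]: "length (prefix_of_real \<psi> x n) = n"
  by (induction n) auto

lemma prefix_of_real_eq_iff:
  assumes "precise_fs \<psi>" "0 \<le> x" "x < 1"
  shows "prefix_of_real \<psi> x n = s \<longleftrightarrow>
    length s = n \<and> fst (subinterval \<psi> s) \<le> x \<and> x < snd (subinterval \<psi> s)"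
proof (induction n arbitrary: s)
  case (Suc n)
  show ?case
  proof
    assume s: "prefix_of_real \<psi> x (Suc n) = s"
    let ?t = "prefix_of_real \<psi> x n"
    have "fst (subinterval \<psi> ?t) \<le> x" "x < snd (subinterval \<psi> ?t)" using Suc.IH[of ?t] by auto
    with s show "length s = Suc n \<and> fst (subinterval \<psi> s) \<le> x \<and> x < snd (subinterval \<psi> s)"
      by (auto simp: subinterval_snoc not_le)
  next
    assume s: "length s = Suc n \<and> fst (subinterval \<psi> s) \<le> x \<and> x < snd (subinterval \<psi> s)"
    then obtain t b where tb: "s = t @ [b]" by (metis length_Suc_conv_rev)
    have "fst (subinterval \<psi> t) \<le> snd (subinterval \<psi> t)"
      using subinterval_props[OF assms(1)] by blast
    note bounds = split_point_bounds[OF assms(1) this]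
    have "fst (subinterval \<psi> t) \<le> x \<and> x < snd (subinterval \<psi> t)"
      using s bounds unfolding tb by (cases b) (auto simp: subinterval_snoc)
    then have "prefix_of_real \<psi> x n = t" using Suc.IH[of t] s tb by simp
    moreover have "(split_point \<psi> t \<le> x) = b" using s unfolding tb by (cases b) (auto simp: subinterval_snoc)
    ultimately show "prefix_of_real \<psi> x (Suc n) = s" using tb by simp
  qed
qed (use assms in auto)

definition path_of_real :: "(bool list \<Rightarrow> real) \<Rightarrow> real \<Rightarrow> nat \<Rightarrow> bool" where
  "path_of_real \<psi> x i = prefix_of_real \<psi> x (Suc i) ! i"

lemma prefix_path_of_real: "prefix (path_of_real \<psi> x) n = prefix_of_real \<psi> x n"
  by (induction n) (simp_all add: prefix_Suc path_of_real_def nth_append)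

lemma measurable_prefix_of_real: "(\<lambda>x. prefix_of_real \<psi> x n) \<in> measurable borel (count_space UNIV)"
proof (induction n)
  case (Suc n)
  have "(\<lambda>x. (\<lambda>t x. t @ [split_point \<psi> t \<le> x]) (prefix_of_real \<psi> x n) x)
      \<in> measurable borel (count_space UNIV)"
  proof (rule measurable_compose_countable'[OF _ Suc.IH])
    fix t :: "bool list"
    have "(\<lambda>x. if split_point \<psi> t \<le> x then t @ [True] else t @ [False]) \<in> measurable borel (count_space UNIV)"
      by (rule measurable_If) auto
    then show "(\<lambda>x. t @ [split_point \<psi> t \<le> x]) \<in> measurable borel (count_space UNIV)"
      by (simp add: if_distrib[of "\<lambda>b. t @ [b]", symmetric])
  qed simp
  then show ?case by simp
qed simp

lemma measurable_path_of_real: "path_of_real \<psi> \<in> measurable borel cantor"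
proof -
  have "(\<lambda>x. path_of_real \<psi> x i) \<in> measurable borel (count_space UNIV)" for i
    unfolding path_of_real_def
    using measurable_compose[OF measurable_prefix_of_real[of \<psi> "Suc i"], of "\<lambda>t. t ! i"] by simp
  then show ?thesis
    unfolding cantor_def by (intro measurable_PiM_single') simp_all
qed

lemma is_mu_of_distr_path_of_real:
  assumes "precise_fs \<psi>"
  shows "is_mu_of \<psi> (distr (uniform_measure lborel {0..<1}) cantor (path_of_real \<psi>))"
proof -
  let ?U = "uniform_measure lborel {0..<1::real}"
  let ?\<mu> = "distr ?U cantor (path_of_real \<psi>)"
  have U: "prob_space ?U" by (rule prob_space_uniform_measure) auto
  have X: "path_of_real \<psi> \<in> measurable ?U cantor"
    using measurable_path_of_real measurable_cong_sets[of ?U borel cantor cantor] by simp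
  have "measure ?\<mu> (cyl s) = cyl_prob \<psi> s" for s
  proof -
    let ?l = "fst (subinterval \<psi> s)" and ?h = "snd (subinterval \<psi> s)"
    have props: "0 \<le> ?l" "?l \<le> ?h" "?h \<le> 1" "?h - ?l = cyl_prob \<psi> s"
      using subinterval_props[OF assms, of s] by auto
    have preimage: "{0..<1} \<inter> (path_of_real \<psi> -` cyl s \<inter> space ?U) = {?l..<?h}"
      using prefix_of_real_eq_iff[OF assms] props by (auto simp: mem_cyl_iff prefix_path_of_real)
    have "path_of_real \<psi> -` cyl s \<inter> space ?U \<in> sets lborel"
      using measurable_sets[OF measurable_path_of_real sets_cyl, of \<psi> s] by simp
    then have "emeasure ?\<mu> (cyl s) =
        emeasure lborel ({0..<1} \<inter> (path_of_real \<psi> -` cyl s \<inter> space ?U)) / emeasure lborel {0..<1::real}"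
      by (simp add: emeasure_distr[OF X sets_cyl] emeasure_uniform_measure)
    also have "\<dots> = ennreal (cyl_prob \<psi> s)"
      unfolding preimage using props by (simp add: divide_ennreal_def)
    finally show ?thesis using props by (simp add: measure_def)
  qed
  moreover have "borel_prob ?\<mu>"
    unfolding borel_prob_def using prob_space.prob_space_distr[OF U X] by simp
  ultimately show ?thesis unfolding is_mu_of_def cyl_prob_def[symmetric] by blast
qed

section \<open>Supermartingales bound the measures\<close>

lemma supermartingale_child_le:
  assumes fs: "forecasting_system \<phi>" and sm: "supermartingale \<phi> M"
  shows "\<exists>b. M (t @ [b]) \<le> M t"
proof -
  let ?p = "lower_fs \<phi> t" and ?x = "M (t @ [True])" and ?y = "M (t @ [False])"
  have p: "?p \<in> \<phi> t" "0 \<le> ?p" "?p \<le> 1"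
    using forecasting_system_bounds[OF fs, of t] mem_forecasting_system_iff[OF fs] by auto
  have "min ?x ?y \<le> ?p * ?x + (1 - ?p) * ?y"
  proof (cases "?x \<le> ?y")
    case True
    then have "(1 - ?p) * ?x \<le> (1 - ?p) * ?y" using p by (intro mult_left_mono) auto
    with True show ?thesis by (simp add: algebra_simps)
  next
    case False
    then have "?p * ?y \<le> ?p * ?x" using p by (intro mult_left_mono) auto
    with False show ?thesis by (simp add: algebra_simps)
  qed
  also have "\<dots> \<le> upper_exp (\<phi> t) (\<lambda>b. M (t @ [b]))" using upper_exp_ge[OF fs p(1), of "\<lambda>b. M (t @ [b])"] by simp
  also have "\<dots> \<le> M t" using sm by (simp add: supermartingale_def)
  finally show ?thesis by (metis min_def)
qed

lemma prefix_limit_of_snoc_chain: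
  assumes step: "\<And>k. \<exists>b. c (Suc k) = c k @ [b]"
  shows "prefix (\<lambda>i. c (Suc i) ! i) (length (c 0) + k) = c k"
proof -
  have length_c: "length (c k) = length (c 0) + k" for k
  proof (induction k)
    case (Suc k)
    then show ?case using step[of k] by auto
  qed simp
  have nth_c: "c m ! i = c k ! i" if "k \<le> m" "i < length (c k)" for i k m
    using that(1)
  proof (induction m)
    case (Suc m)
    show ?case
    proof (cases "k = Suc m")
      case False
      with Suc.prems have "k \<le> m" by simp
      moreover obtain b where "c (Suc m) = c m @ [b]" using step by blast
      ultimately show ?thesis
        using Suc.IH that(2) length_c[of k] length_c[of m] by (simp add: nth_append)
    qed simp
  qed simp
  show ?thesis
  proof (rule nth_equalityI)
    fix i assume "i < length (prefix (\<lambda>i. c (Suc i) ! i) (length (c 0) + k))"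
    then have i: "i < length (c 0) + k" by simp
    have "c (Suc i) ! i = c (max k (Suc i)) ! i"
      using length_c[of "Suc i"] by (intro nth_c[symmetric]) auto
    also have "\<dots> = c k ! i"
      using i length_c[of k] by (intro nth_c) auto
    finally show "prefix (\<lambda>i. c (Suc i) ! i) (length (c 0) + k) ! i = c k ! i" using i by simp
  qed (simp add: length_c[of k])
qed

text \<open>Moving always to a child where the supermartingale does not increase produces a path along
  which it never exceeds its value at the start; this contradicts a negative start.\<close>

lemma supermartingale_nonneg:
  assumes fs: "forecasting_system \<phi>" and sm: "supermartingale \<phi> M"
    and lim: "\<And>\<omega>. ereal (indicator G \<omega>) \<le> liminf (\<lambda>n. ereal (M (prefix \<omega> n)))"
  shows "0 \<le> M s"
proof (rule ccontr)
  assume neg: "\<not> 0 \<le> M s"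
  define c where "c k = ((\<lambda>t. t @ [SOME b. M (t @ [b]) \<le> M t]) ^^ k) s" for k
  have c_0: "c 0 = s" and c_Suc: "c (Suc k) = c k @ [SOME b. M (c k @ [b]) \<le> M (c k)]" for k
    by (simp_all add: c_def)
  have c_le: "M (c k) \<le> M s" for k
  proof (induction k)
    case (Suc k)
    have "M (c (Suc k)) \<le> M (c k)"
      unfolding c_Suc using supermartingale_child_le[OF fs sm] by (rule someI_ex)
    with Suc show ?case by linarith
  qed (simp add: c_0)
  define \<omega> where "\<omega> = (\<lambda>i. c (Suc i) ! i)"
  have prefix_\<omega>: "prefix \<omega> (length s + k) = c k" for k
    using prefix_limit_of_snoc_chain[of c k] c_Suc unfolding \<omega>_def c_0 by blast
  have "ereal (M s) < ereal (indicator G \<omega>)" using neg by (simp add: indicator_def)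
  also have "\<dots> \<le> liminf (\<lambda>n. ereal (M (prefix \<omega> n)))" by (rule lim)
  finally have "\<forall>\<^sub>F n in sequentially. ereal (M s) < ereal (M (prefix \<omega> n))"
    by (rule less_LiminfD)
  then obtain N where "\<And>n. n \<ge> N \<Longrightarrow> M s < M (prefix \<omega> n)"
    by (auto simp: eventually_sequentially)
  then have "M s < M (c N)" using prefix_\<omega>[of N] by (metis le_add2)
  with c_le[of N] show False by simp
qed

lemma finite_lists_of_length: "finite {u :: bool list. length u = n}"
  using finite_lists_length_eq[of "UNIV :: bool set" n] by simp

lemma sum_lists_of_length_Suc:
  fixes g :: "bool list \<Rightarrow> 'a :: comm_monoid_add"
  shows "(\<Sum>u | length u = Suc j. g u) = (\<Sum>u | length u = j. g (True # u)) + (\<Sum>u | length u = j. g (False # u))"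
proof -
  have "{u :: bool list. length u = Suc j} = (\<lambda>(b, u). b # u) ` (UNIV \<times> {u. length u = j})"
    by (auto simp: length_Suc_conv image_iff)
  moreover have "inj_on (\<lambda>(b, u). b # u) (UNIV \<times> {u :: bool list. length u = j})"
    by (auto simp: inj_on_def)
  ultimately have "(\<Sum>u | length u = Suc j. g u) = (\<Sum>(b, u) \<in> UNIV \<times> {u. length u = j}. g (b # u))"
    by (simp add: sum.reindex case_prod_beta')
  also have "\<dots> = (\<Sum>b\<in>UNIV. \<Sum>u | length u = j. g (b # u))"
    by (simp add: sum.cartesian_product)
  finally show ?thesis by (simp add: UNIV_bool add.commute)
qed

lemma sum_supermartingale_cyl_prob_le:
  assumes fs: "forecasting_system \<phi>" and sm: "supermartingale \<phi> M"
    and \<psi>: "precise_fs \<psi>" "\<And>s. \<psi> s \<in> \<phi> s"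
  shows "(\<Sum>u | length u = j. M (s @ u) * cyl_prob \<psi> (s @ u)) \<le> M s * cyl_prob \<psi> s"
proof (induction j arbitrary: s)
  case 0
  have "{u :: bool list. length u = 0} = {[]}" by auto
  then show ?case by simp
next
  case (Suc j)
  have "(\<Sum>u | length u = Suc j. M (s @ u) * cyl_prob \<psi> (s @ u))
      = (\<Sum>u | length u = j. M ((s @ [True]) @ u) * cyl_prob \<psi> ((s @ [True]) @ u))
        + (\<Sum>u | length u = j. M ((s @ [False]) @ u) * cyl_prob \<psi> ((s @ [False]) @ u))"
    by (simp add: sum_lists_of_length_Suc)
  also have "\<dots> \<le> M (s @ [True]) * cyl_prob \<psi> (s @ [True]) + M (s @ [False]) * cyl_prob \<psi> (s @ [False])"
    using Suc.IH[of "s @ [True]"] Suc.IH[of "s @ [False]"] by linarith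
  also have "\<dots> = cyl_prob \<psi> s * (\<psi> s * M (s @ [True]) + (1 - \<psi> s) * M (s @ [False]))"
    by (simp add: cyl_prob_snoc algebra_simps)
  also have "\<dots> \<le> cyl_prob \<psi> s * M s"
  proof (rule mult_left_mono)
    have "\<psi> s * M (s @ [True]) + (1 - \<psi> s) * M (s @ [False]) \<le> upper_exp (\<phi> s) (\<lambda>b. M (s @ [b]))"
      using upper_exp_ge[OF fs \<psi>(2)[of s], of "\<lambda>b. M (s @ [b])"] by simp
    also have "\<dots> \<le> M s" using sm by (simp add: supermartingale_def)
    finally show "\<psi> s * M (s @ [True]) + (1 - \<psi> s) * M (s @ [False]) \<le> M s" .
  qed (rule cyl_prob_nonneg[OF \<psi>(1)])
  finally show ?case by (simp add: mult.commute)
qed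

lemma sum_indicator_cyl_length:
  fixes f :: "bool list \<Rightarrow> ennreal"
  shows "(\<Sum>u | length u = n. f u * indicator (cyl u) \<omega>) = f (prefix \<omega> n)"
proof -
  have "(\<Sum>u | length u = n. f u * indicator (cyl u) \<omega>) = (\<Sum>u | length u = n. if u = prefix \<omega> n then f u else 0)"
    by (rule sum.cong) (auto simp: indicator_def mem_cyl_iff)
  then show ?thesis by (simp add: sum.delta' finite_lists_of_length)
qed

lemma nn_integral_supermartingale_prefix_le:
  assumes fs: "forecasting_system \<phi>" and sm: "supermartingale \<phi> M" and M: "\<And>s. 0 \<le> M s"
    and \<psi>: "precise_fs \<psi>" "\<And>s. \<psi> s \<in> \<phi> s" and \<mu>: "is_mu_of \<psi> \<mu>"
  shows "(\<integral>\<^sup>+ \<omega>. ennreal (M (prefix \<omega> n)) \<partial>\<mu>) \<le> ennreal (M [])"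
proof -
  interpret prob_space \<mu> using is_mu_of_prob_space[OF \<mu>] .
  note sets = is_mu_of_sets[OF \<mu>]
  have "(\<integral>\<^sup>+ \<omega>. ennreal (M (prefix \<omega> n)) \<partial>\<mu>)
      = (\<integral>\<^sup>+ \<omega>. (\<Sum>u | length u = n. ennreal (M u) * indicator (cyl u) \<omega>) \<partial>\<mu>)"
    by (simp add: sum_indicator_cyl_length)
  also have "\<dots> = (\<Sum>u | length u = n. ennreal (M u) * emeasure \<mu> (cyl u))"
    using sets by (simp add: nn_integral_sum nn_integral_cmult_indicator)
  also have "\<dots> = (\<Sum>u | length u = n. ennreal (M u * cyl_prob \<psi> u))"
    using M cyl_prob_nonneg[OF \<psi>(1)]
    by (intro sum.cong) (simp_all add: emeasure_eq_measure is_mu_of_measure_cyl[OF \<mu>] ennreal_mult)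
  also have "\<dots> = ennreal (\<Sum>u | length u = n. M u * cyl_prob \<psi> u)"
    using M cyl_prob_nonneg[OF \<psi>(1)] by (intro sum_ennreal) simp
  also have "\<dots> \<le> ennreal (M [])"
    using sum_supermartingale_cyl_prob_le[OF fs sm \<psi>, where j = n and s = "[]"] by (simp add: ennreal_leI)
  finally show ?thesis .
qed

lemma indicator_le_liminf_ennreal:
  assumes "ereal (indicator G \<omega>) \<le> liminf (\<lambda>n. ereal (f n))"
  shows "indicator G \<omega> \<le> liminf (\<lambda>n. ennreal (f n))"
proof (cases "\<omega> \<in> G")
  case True
  show ?thesis unfolding le_Liminf_iff
  proof (intro allI impI)
    fix y :: ennreal assume "y < indicator G \<omega>"
    with True have "y < 1" by simp
    then obtain t where t: "y = ennreal t" "0 \<le> t" "t < 1"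
      by (cases y rule: ennreal_cases) (auto simp: ennreal_less_one_iff)
    have "ereal t < ereal (indicator G \<omega>)" using True t(3) by simp
    also have "\<dots> \<le> liminf (\<lambda>n. ereal (f n))" by (rule assms)
    finally have "\<forall>\<^sub>F n in sequentially. ereal t < ereal (f n)"
      by (rule less_LiminfD)
    then show "\<forall>\<^sub>F n in sequentially. y < ennreal (f n)"
      by (rule eventually_mono) (use t in \<open>auto intro: ennreal_lessI\<close>)
  qed
qed simp

lemma measure_le_supermartingale:
  assumes fs: "forecasting_system \<phi>" and sm: "supermartingale \<phi> M"
    and lim: "\<And>\<omega>. ereal (indicator G \<omega>) \<le> liminf (\<lambda>n. ereal (M (prefix \<omega> n)))"
    and \<psi>: "precise_fs \<psi>" "\<And>s. \<psi> s \<in> \<phi> s" and \<mu>: "is_mu_of \<psi> \<mu>" and G: "G \<in> sets cantor"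
  shows "measure \<mu> G \<le> M []"
proof -
  interpret prob_space \<mu> using is_mu_of_prob_space[OF \<mu>] .
  note sets = is_mu_of_sets[OF \<mu>]
  note M = supermartingale_nonneg[OF fs sm lim]
  have meas: "(\<lambda>\<omega>. ennreal (M (prefix \<omega> n))) \<in> borel_measurable \<mu>" for n
    using measurable_prefix[of n] by (simp add: measurable_cong_sets[OF sets refl])
  have "indicator G \<omega> \<le> liminf (\<lambda>n. ennreal (M (prefix \<omega> n)))" for \<omega>
    using lim by (rule indicator_le_liminf_ennreal)
  then have "(\<integral>\<^sup>+ \<omega>. indicator G \<omega> \<partial>\<mu>) \<le> (\<integral>\<^sup>+ \<omega>. liminf (\<lambda>n. ennreal (M (prefix \<omega> n))) \<partial>\<mu>)"
    by (rule nn_integral_mono)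
  then have "emeasure \<mu> G \<le> (\<integral>\<^sup>+ \<omega>. liminf (\<lambda>n. ennreal (M (prefix \<omega> n))) \<partial>\<mu>)"
    using G sets by simp
  also have "\<dots> \<le> liminf (\<lambda>n. \<integral>\<^sup>+ \<omega>. ennreal (M (prefix \<omega> n)) \<partial>\<mu>)"
    by (rule nn_integral_liminf) (rule meas)
  also have "\<dots> \<le> limsup (\<lambda>n. \<integral>\<^sup>+ \<omega>. ennreal (M (prefix \<omega> n)) \<partial>\<mu>)"
    by (rule Liminf_le_Limsup) simp
  also have "\<dots> \<le> ennreal (M [])"
    by (rule Limsup_bounded) (simp add: nn_integral_supermartingale_prefix_le[OF fs sm M \<psi> \<mu>])
  finally show ?thesis using M[of "[]"] by (simp add: emeasure_eq_measure)
qed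

lemma measure_le_upper_prob:
  assumes fs: "forecasting_system \<phi>" and \<psi>: "precise_fs \<psi>" "\<And>s. \<psi> s \<in> \<phi> s"
    and \<mu>: "is_mu_of \<psi> \<mu>" and G: "G \<in> sets cantor" and up: "upper_prob \<phi> G \<le> ereal c"
  shows "measure \<mu> G \<le> c"
proof (rule ccontr)
  assume "\<not> measure \<mu> G \<le> c"
  with up have "upper_prob \<phi> G < ereal (measure \<mu> G)" by (simp add: not_le le_less_trans)
  then obtain M where M: "supermartingale \<phi> M"
      "\<And>\<omega>. ereal (indicator G \<omega>) \<le> liminf (\<lambda>n. ereal (M (prefix \<omega> n)))" "M [] < measure \<mu> G"
    unfolding upper_prob_def INF_less_iff by auto
  with measure_le_supermartingale[OF fs M(1,2) \<psi> \<mu> G] show False by simp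
qed

section \<open>Upper probability of a union of cylinders\<close>

definition has_prefix_in :: "bool list set \<Rightarrow> bool list \<Rightarrow> bool" where
  "has_prefix_in S s \<longleftrightarrow> (\<exists>k\<le>length s. take k s \<in> S)"

lemma has_prefix_in_snoc: "has_prefix_in S s \<Longrightarrow> has_prefix_in S (s @ [b])"
  unfolding has_prefix_in_def by (metis le_SucI length_append_singleton take_append take_eq_Nil
      diff_is_0_eq append_Nil2)

lemma has_prefix_in_prefix:
  "t \<in> S \<Longrightarrow> \<omega> \<in> cyl t \<Longrightarrow> length t \<le> n \<Longrightarrow> has_prefix_in S (prefix \<omega> n)"
  unfolding has_prefix_in_def mem_cyl_iff by (intro exI[of _ "length t"]) (simp add: min.absorb1)

text \<open>Upper probability of meeting \<open>S\<close> within \<open>j\<close> further steps, computed by backward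
  induction.\<close>

fun reach_value :: "(bool list \<Rightarrow> real set) \<Rightarrow> bool list set \<Rightarrow> nat \<Rightarrow> bool list \<Rightarrow> real" where
  "reach_value \<phi> S 0 s = (if has_prefix_in S s then 1 else 0)"
| "reach_value \<phi> S (Suc j) s =
    (if has_prefix_in S s then 1 else upper_exp (\<phi> s) (\<lambda>b. reach_value \<phi> S j (s @ [b])))"

lemma reach_value_has_prefix_in: "has_prefix_in S s \<Longrightarrow> reach_value \<phi> S j s = 1"
  by (cases j) auto

lemma reach_value_bounds:
  assumes fs: "forecasting_system \<phi>"
  shows "0 \<le> reach_value \<phi> S j s \<and> reach_value \<phi> S j s \<le> 1"
proof (induction j arbitrary: s)
  case (Suc j)
  let ?f = "\<lambda>b. reach_value \<phi> S j (s @ [b])"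
  have "upper_exp (\<phi> s) ?f \<le> 1"
  proof (rule upper_exp_le[OF fs])
    fix p assume "p \<in> \<phi> s"
    then have "0 \<le> p" "p \<le> 1" using forecasting_system_in_01[OF fs] by auto
    then have "p * ?f True \<le> p * 1" "(1 - p) * ?f False \<le> (1 - p) * 1"
      using Suc.IH by (intro mult_left_mono; auto)+
    then show "p * ?f True + (1 - p) * ?f False \<le> 1" by simp
  qed
  moreover have "0 \<le> upper_exp (\<phi> s) ?f"
  proof -
    have "lower_fs \<phi> s \<in> \<phi> s"
      using forecasting_system_bounds[OF fs] mem_forecasting_system_iff[OF fs] by simp
    moreover from this have "0 \<le> lower_fs \<phi> s * ?f True + (1 - lower_fs \<phi> s) * ?f False"
      using Suc.IH forecasting_system_in_01[OF fs] by (intro add_nonneg_nonneg mult_nonneg_nonneg) auto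
    ultimately show ?thesis using upper_exp_ge[OF fs, of "lower_fs \<phi> s" s ?f] by linarith
  qed
  ultimately show ?case by (simp del: reach_value.simps(2) add: reach_value.simps(2)[of \<phi> S j])
qed simp

lemma reach_value_le_Suc:
  assumes fs: "forecasting_system \<phi>"
  shows "reach_value \<phi> S j s \<le> reach_value \<phi> S (Suc j) s"
proof (induction j arbitrary: s)
  case 0
  show ?case
    using reach_value_bounds[OF fs, of S "Suc 0" s] reach_value_has_prefix_in[of S s \<phi> "Suc 0"]
    by (auto simp del: reach_value.simps(2))
next
  case (Suc j)
  then show ?case
    by (simp del: reach_value.simps(2) add: reach_value.simps(2)[of \<phi> S] upper_exp_mono[OF fs])
qed

definition optimal_forecast :: "(bool list \<Rightarrow> real set) \<Rightarrow> bool list set \<Rightarrow> nat \<Rightarrow> bool list \<Rightarrow> real" where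
  "optimal_forecast \<phi> S H s =
    (let f = \<lambda>b. reach_value \<phi> S (H - length s - 1) (s @ [b]) in
     if upper_fs \<phi> s * f True + (1 - upper_fs \<phi> s) * f False
        \<le> lower_fs \<phi> s * f True + (1 - lower_fs \<phi> s) * f False
     then lower_fs \<phi> s else upper_fs \<phi> s)"

lemma optimal_forecast_in: "forecasting_system \<phi> \<Longrightarrow> optimal_forecast \<phi> S H s \<in> \<phi> s"
  using forecasting_system_bounds[of \<phi> s] mem_forecasting_system_iff[of \<phi> _ s]
  by (simp add: optimal_forecast_def Let_def)

lemma precise_optimal_forecast: "forecasting_system \<phi> \<Longrightarrow> precise_fs (optimal_forecast \<phi> S H)"
  unfolding precise_fs_def using optimal_forecast_in forecasting_system_in_01 by blast

lemma optimal_forecast_attains: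
  assumes fs: "forecasting_system \<phi>"
    and f: "f = (\<lambda>b. reach_value \<phi> S (H - length s - 1) (s @ [b]))"
  shows "optimal_forecast \<phi> S H s * f True + (1 - optimal_forecast \<phi> S H s) * f False
    = upper_exp (\<phi> s) f"
  unfolding upper_exp_eq_max_endpoints[OF fs] optimal_forecast_def f[symmetric] Let_def
  by (simp add: max_def)

lemma measure_cyl_inter_has_prefix_in:
  assumes \<mu>: "is_mu_of \<psi> \<mu>" and "has_prefix_in S s" "length s \<le> H"
  shows "measure \<mu> (cyl s \<inter> cyl_union {t\<in>S. length t \<le> H}) = cyl_prob \<psi> s"
proof -
  obtain k where k: "k \<le> length s" "take k s \<in> S" using assms(2) unfolding has_prefix_in_def by blast
  have "cyl s \<subseteq> cyl (take k s)" using k(1) by (rule cyl_subset_cyl_take)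
  moreover have "take k s \<in> {t\<in>S. length t \<le> H}" using k assms(3) by simp
  ultimately have "cyl s \<subseteq> cyl_union {t\<in>S. length t \<le> H}" unfolding cyl_union_def by blast
  then show ?thesis by (simp add: Int_absorb2 is_mu_of_measure_cyl[OF \<mu>])
qed

lemma cyl_inter_cyl_union_eq_empty:
  assumes "\<not> has_prefix_in S s" "length s = H"
  shows "cyl s \<inter> cyl_union {t\<in>S. length t \<le> H} = {}"
proof (rule ccontr)
  assume "cyl s \<inter> cyl_union {t\<in>S. length t \<le> H} \<noteq> {}"
  then obtain \<omega> t where \<omega>: "\<omega> \<in> cyl s" "\<omega> \<in> cyl t" "t \<in> S" "length t \<le> H"
    unfolding cyl_union_def by blast
  then have "prefix \<omega> H = s" using assms(2) by (simp add: mem_cyl_iff)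
  with has_prefix_in_prefix[OF \<omega>(3,2,4)] assms(1) show False by simp
qed

lemma measure_cyl_inter_eq_reach_value:
  assumes fs: "forecasting_system \<phi>" and \<mu>: "is_mu_of (optimal_forecast \<phi> S H) \<mu>"
  shows "length s + j = H \<Longrightarrow>
    measure \<mu> (cyl s \<inter> cyl_union {t\<in>S. length t \<le> H}) =
      cyl_prob (optimal_forecast \<phi> S H) s * reach_value \<phi> S j s"
proof (induction j arbitrary: s)
  case 0
  show ?case
  proof (cases "has_prefix_in S s")
    case False
    with 0 show ?thesis by (simp add: cyl_inter_cyl_union_eq_empty)
  qed (use 0 measure_cyl_inter_has_prefix_in[OF \<mu>] in simp)
next
  case (Suc j)
  let ?\<psi> = "optimal_forecast \<phi> S H" and ?E = "cyl_union {t\<in>S. length t \<le> H}"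
  interpret prob_space \<mu> using is_mu_of_prob_space[OF \<mu>] .
  note sets = is_mu_of_sets[OF \<mu>]
  show ?case
  proof (cases "has_prefix_in S s")
    case False
    have split: "cyl s \<inter> ?E = (cyl (s @ [True]) \<inter> ?E) \<union> (cyl (s @ [False]) \<inter> ?E)"
      using cyl_snoc[of s] by blast
    have "measure \<mu> (cyl s \<inter> ?E) = measure \<mu> (cyl (s @ [True]) \<inter> ?E) + measure \<mu> (cyl (s @ [False]) \<inter> ?E)"
      unfolding split using sets cyl_snoc_disjoint[of s] by (intro finite_measure_Union) auto
    also have "\<dots> = cyl_prob ?\<psi> (s @ [True]) * reach_value \<phi> S j (s @ [True])
        + cyl_prob ?\<psi> (s @ [False]) * reach_value \<phi> S j (s @ [False])"
      using Suc by simp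
    also have "\<dots> = cyl_prob ?\<psi> s * (?\<psi> s * reach_value \<phi> S j (s @ [True])
        + (1 - ?\<psi> s) * reach_value \<phi> S j (s @ [False]))"
      by (simp add: cyl_prob_snoc algebra_simps)
    also have "\<dots> = cyl_prob ?\<psi> s * reach_value \<phi> S (Suc j) s"
    proof -
      have j: "H - length s - 1 = j" using Suc.prems by simp
      show ?thesis using optimal_forecast_attains[OF fs refl, of S H s] False unfolding j by simp
    qed
    finally show ?thesis .
  qed (use Suc.prems measure_cyl_inter_has_prefix_in[OF \<mu>] in simp)
qed

lemma reach_value_Nil_le:
  assumes fs: "forecasting_system \<phi>"
    and bound: "\<And>\<psi> \<mu>. precise_fs \<psi> \<Longrightarrow> (\<forall>s. \<psi> s \<in> \<phi> s) \<Longrightarrow> is_mu_of \<psi> \<mu> \<Longrightarrow> measure \<mu> (cyl_union S) \<le> c"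
  shows "reach_value \<phi> S H [] \<le> c"
proof -
  let ?\<psi> = "optimal_forecast \<phi> S H"
  let ?\<mu> = "distr (uniform_measure lborel {0..<1}) cantor (path_of_real ?\<psi>)"
  have \<psi>: "precise_fs ?\<psi>" by (rule precise_optimal_forecast[OF fs])
  have \<mu>: "is_mu_of ?\<psi> ?\<mu>" by (rule is_mu_of_distr_path_of_real[OF \<psi>])
  interpret prob_space ?\<mu> using is_mu_of_prob_space[OF \<mu>] .
  have "reach_value \<phi> S H [] = measure ?\<mu> (cyl [] \<inter> cyl_union {t\<in>S. length t \<le> H})"
    using measure_cyl_inter_eq_reach_value[OF fs \<mu>, of "[]" H] by simp
  also have "\<dots> \<le> measure ?\<mu> (cyl_union S)"
    using is_mu_of_sets[OF \<mu>] by (intro finite_measure_mono) (auto simp: cyl_union_def)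
  also have "\<dots> \<le> c" using optimal_forecast_in[OF fs] by (intro bound[OF \<psi> _ \<mu>]) auto
  finally show ?thesis .
qed

definition reach_prob :: "(bool list \<Rightarrow> real set) \<Rightarrow> bool list set \<Rightarrow> bool list \<Rightarrow> real" where
  "reach_prob \<phi> S s = (SUP j. reach_value \<phi> S j s)"

lemma reach_value_tendsto:
  "forecasting_system \<phi> \<Longrightarrow> (\<lambda>j. reach_value \<phi> S j s) \<longlonglongrightarrow> reach_prob \<phi> S s"
  unfolding reach_prob_def using reach_value_bounds[of \<phi>]
  by (intro LIMSEQ_incseq_SUP) (auto intro!: incseq_SucI reach_value_le_Suc simp: bdd_above_def)

lemma supermartingale_reach_prob:
  assumes fs: "forecasting_system \<phi>"
  shows "supermartingale \<phi> (reach_prob \<phi> S)"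
  unfolding supermartingale_def
proof
  fix s
  show "upper_exp (\<phi> s) (\<lambda>b. reach_prob \<phi> S (s @ [b])) \<le> reach_prob \<phi> S s"
  proof (rule upper_exp_le[OF fs])
    fix p assume p: "p \<in> \<phi> s"
    have "p * reach_value \<phi> S j (s @ [True]) + (1 - p) * reach_value \<phi> S j (s @ [False])
        \<le> reach_value \<phi> S (Suc j) s" for j
      using upper_exp_ge[OF fs p, of "\<lambda>b. reach_value \<phi> S j (s @ [b])"]
        reach_value_has_prefix_in[OF has_prefix_in_snoc] by (cases "has_prefix_in S s") auto
    moreover have "(\<lambda>j. p * reach_value \<phi> S j (s @ [True]) + (1 - p) * reach_value \<phi> S j (s @ [False]))
        \<longlonglongrightarrow> p * reach_prob \<phi> S (s @ [True]) + (1 - p) * reach_prob \<phi> S (s @ [False])"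
      by (intro tendsto_intros reach_value_tendsto[OF fs])
    moreover have "(\<lambda>j. reach_value \<phi> S (Suc j) s) \<longlonglongrightarrow> reach_prob \<phi> S s"
      using reach_value_tendsto[OF fs] by (rule LIMSEQ_Suc)
    ultimately show "p * reach_prob \<phi> S (s @ [True]) + (1 - p) * reach_prob \<phi> S (s @ [False])
        \<le> reach_prob \<phi> S s"
      by (intro LIMSEQ_le) auto
  qed
qed

lemma indicator_le_liminf_reach_prob:
  assumes fs: "forecasting_system \<phi>"
  shows "ereal (indicator (cyl_union S) \<omega>) \<le> liminf (\<lambda>n. ereal (reach_prob \<phi> S (prefix \<omega> n)))"
proof (cases "\<omega> \<in> cyl_union S")
  case True
  then obtain t where t: "t \<in> S" "\<omega> \<in> cyl t" unfolding cyl_union_def by blast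
  have "\<forall>\<^sub>F n in sequentially. reach_prob \<phi> S (prefix \<omega> n) = 1"
    using has_prefix_in_prefix[OF t] reach_value_has_prefix_in
    by (auto simp: eventually_sequentially reach_prob_def intro!: exI[of _ "length t"])
  then have "liminf (\<lambda>n. ereal (reach_prob \<phi> S (prefix \<omega> n))) = 1"
    by (simp add: Liminf_eq tendsto_eventually eventually_mono lim_imp_Liminf)
  with True show ?thesis by simp
next
  case False
  have "0 \<le> reach_prob \<phi> S s" for s
    using LIMSEQ_le_const[OF reach_value_tendsto[OF fs]] reach_value_bounds[OF fs] by blast
  with False show ?thesis by (simp add: Liminf_bounded)
qed

lemma upper_prob_cyl_union_le:
  assumes fs: "forecasting_system \<phi>"
    and bound: "\<And>\<psi> \<mu>. precise_fs \<psi> \<Longrightarrow> (\<forall>s. \<psi> s \<in> \<phi> s) \<Longrightarrow> is_mu_of \<psi> \<mu> \<Longrightarrow> measure \<mu> (cyl_union S) \<le> c"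
  shows "upper_prob \<phi> (cyl_union S) \<le> ereal c"
proof -
  have "upper_prob \<phi> (cyl_union S) \<le> ereal (reach_prob \<phi> S [])"
    unfolding upper_prob_def
    using supermartingale_reach_prob[OF fs] indicator_le_liminf_reach_prob[OF fs]
    by (intro INF_lower2[of "reach_prob \<phi> S"]) auto
  also have "reach_prob \<phi> S [] \<le> c"
    unfolding reach_prob_def by (intro cSUP_least reach_value_Nil_le[OF fs bound]) auto
  finally show ?thesis by simp
qed

section \<open>Martin-Loef tests and uniform tests\<close>

lemma ereal_less_enn2ereal_iff: "0 \<le> x \<Longrightarrow> ereal x < enn2ereal t \<longleftrightarrow> ennreal x < t"
  by (metis enn2ereal_ennreal less_ennreal.rep_eq)

lemma const_mult_emeasure_le_nn_integral:
  assumes "G \<in> sets \<mu>" "\<And>\<omega>. \<omega> \<in> G \<Longrightarrow> c \<le> \<tau> \<omega>"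
  shows "c * emeasure \<mu> G \<le> (\<integral>\<^sup>+ \<omega>. \<tau> \<omega> \<partial>\<mu>)"
proof -
  have "c * emeasure \<mu> G = (\<integral>\<^sup>+ \<omega>. c * indicator G \<omega> \<partial>\<mu>)"
    using assms(1) by (rule nn_integral_cmult_indicator[symmetric])
  also have "\<dots> \<le> (\<integral>\<^sup>+ \<omega>. \<tau> \<omega> \<partial>\<mu>)"
    using assms(2) by (intro nn_integral_mono) (simp add: indicator_def)
  finally show ?thesis .
qed

lemma MLtest_pow2_section:
  assumes fs: "forecasting_system \<phi>" and B: "re_rat_str B"
    and levels: "\<And>r. {\<omega>. ereal (real_of_rat r) < enn2ereal (\<tau> \<omega>)} = cyl_union (section_rat B r)"
    and int: "\<And>\<mu>. \<mu> \<in> M_class \<phi> \<Longrightarrow> (\<integral>\<^sup>+ \<omega>. \<tau> \<omega> \<partial>\<mu>) \<le> 1"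
  defines "A \<equiv> {(n, s). ((2::rat) ^ n, s) \<in> B}"
  shows "MLtest \<phi> A" and "cyl_union (section_nat A n) = {\<omega>. ennreal (2 ^ n) < \<tau> \<omega>}"
proof -
  have level_A: "cyl_union (section_nat A n) = {\<omega>. ennreal (2 ^ n) < \<tau> \<omega>}" for n
    using levels[of "2 ^ n"]
    by (simp add: A_def section_nat_def section_rat_def of_rat_power ereal_less_enn2ereal_iff)
  then show "cyl_union (section_nat A n) = {\<omega>. ennreal (2 ^ n) < \<tau> \<omega>}" .
  have "upper_prob \<phi> (cyl_union (section_nat A n)) \<le> ereal ((1 / 2) ^ n)" for n
  proof (rule upper_prob_cyl_union_le[OF fs])
    fix \<psi> \<mu> assume \<psi>: "precise_fs \<psi>" "\<forall>s. \<psi> s \<in> \<phi> s" and \<mu>: "is_mu_of \<psi> \<mu>"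
    interpret prob_space \<mu> using is_mu_of_prob_space[OF \<mu>] .
    have "cyl_union (section_nat A n) \<in> sets \<mu>" using is_mu_of_sets[OF \<mu>] by simp
    then have "ennreal (2 ^ n) * emeasure \<mu> (cyl_union (section_nat A n)) \<le> (\<integral>\<^sup>+ \<omega>. \<tau> \<omega> \<partial>\<mu>)"
      by (rule const_mult_emeasure_le_nn_integral) (use level_A in \<open>auto intro: less_imp_le\<close>)
    also have "\<dots> \<le> 1" using \<psi> \<mu> by (intro int) (auto simp: M_class_def)
    finally have "2 ^ n * measure \<mu> (cyl_union (section_nat A n)) \<le> 1"
      by (simp add: emeasure_eq_measure ennreal_mult'[symmetric])
    then show "measure \<mu> (cyl_union (section_nat A n)) \<le> (1 / 2) ^ n"
      by (simp add: field_simps power_divide)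
  qed
  moreover have "re_nat_str A" unfolding A_def by (rule re_nat_str_pow2_section[OF B])
  ultimately show "MLtest \<phi> A" by (simp add: MLtest_def)
qed

lemma MLtest_random_imp_uniformly_random:
  assumes fs: "forecasting_system \<phi>" and random: "MLtest_random \<phi> \<omega>"
  shows "uniformly_random (M_class \<phi>) \<omega>"
  unfolding uniformly_random_def
proof (intro allI impI)
  fix \<tau> assume "C_test (M_class \<phi>) \<tau>"
  then obtain B where B: "re_rat_str B"
      "\<And>r. {\<omega>. ereal (real_of_rat r) < enn2ereal (\<tau> \<omega>)} = cyl_union (section_rat B r)"
    and int: "\<And>\<mu>. \<mu> \<in> M_class \<phi> \<Longrightarrow> (\<integral>\<^sup>+ \<omega>. \<tau> \<omega> \<partial>\<mu>) \<le> 1"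
    unfolding C_test_def by blast
  note pow2_test = MLtest_pow2_section[OF fs B int]
  show "\<tau> \<omega> < \<infinity>"
  proof (rule ccontr)
    assume "\<not> \<tau> \<omega> < \<infinity>"
    then have "\<tau> \<omega> = \<infinity>" by (simp add: less_top[symmetric])
    then have "\<omega> \<in> (\<Inter>n. cyl_union (section_nat {(n, s). ((2::rat) ^ n, s) \<in> B} n))"
      by (simp add: pow2_test(2))
    with pow2_test(1) random show False unfolding MLtest_random_def by blast
  qed
qed

text \<open>The uniform test built from a Martin-Loef test \<open>A\<close> takes the value \<open>n\<close> on \<open>[A\<^sub>2\<^sub>n]\<close>,
  whose measure is at most \<open>4\<^sup>-\<^sup>n\<close>. Level \<open>0\<close> is the whole space, so that the super-level
  sets at negative rationals are unions of cylinders too.\<close>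

definition test_level :: "(nat \<times> bool list) set \<Rightarrow> nat \<Rightarrow> (nat \<Rightarrow> bool) set" where
  "test_level A n = cyl_union (if n = 0 then UNIV else section_nat A (2 * n))"

definition uniform_test_of :: "(nat \<times> bool list) set \<Rightarrow> (nat \<Rightarrow> bool) \<Rightarrow> ennreal" where
  "uniform_test_of A \<omega> = (SUP n. of_nat n * indicator (test_level A n) \<omega>)"

lemma cyl_union_UNIV: "cyl_union UNIV = UNIV"
  unfolding cyl_union_def using cyl_Nil by blast

lemma test_level_0 [simp]: "test_level A 0 = UNIV"
  by (simp add: test_level_def cyl_union_UNIV)

lemma less_uniform_test_of_iff:
  "ereal x < enn2ereal (uniform_test_of A \<omega>) \<longleftrightarrow> (\<exists>n. x < real n \<and> \<omega> \<in> test_level A n)"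
proof (cases "0 \<le> x")
  case True
  then have "ereal x < enn2ereal (uniform_test_of A \<omega>) \<longleftrightarrow>
      (\<exists>n. ennreal x < of_nat n * indicator (test_level A n) \<omega>)"
    by (simp add: ereal_less_enn2ereal_iff uniform_test_of_def less_SUP_iff)
  also have "\<dots> \<longleftrightarrow> (\<exists>n. x < real n \<and> \<omega> \<in> test_level A n)"
    using True by (auto simp: indicator_def ennreal_of_nat_eq_real_of_nat ennreal_less_iff)
  finally show ?thesis .
next
  case False
  have "ereal x < 0" using False by simp
  also have "0 \<le> enn2ereal (uniform_test_of A \<omega>)" by simp
  finally have "ereal x < enn2ereal (uniform_test_of A \<omega>)" .
  moreover have "x < real 0 \<and> \<omega> \<in> test_level A 0" using False by simp
  ultimately show ?thesis by blast
qed

lemma test_level_subset_cyl_union_code: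
  assumes "real_of_rat r < real n"
  shows "test_level A n \<subseteq> cyl_union (section_rat (uniform_test_code A) r)"
proof
  fix \<omega> assume "\<omega> \<in> test_level A n"
  obtain t where t: "n = 0 \<or> t \<in> section_nat A (2 * n)" "\<omega> \<in> cyl t"
  proof (cases "n = 0")
    case True
    then show ?thesis using that[of "[]"] by simp
  next
    case False
    then show ?thesis using \<open>\<omega> \<in> test_level A n\<close> that unfolding test_level_def cyl_union_def by auto
  qed
  define s where "s = prefix \<omega> (prod_encode (n, length t))"
  have "length t \<le> prod_encode (n, length t)" by (rule le_prod_encode_2)
  then have "take (length t) s = t"
    using t(2) by (simp add: s_def mem_cyl_iff min.absorb1)
  moreover have "prod_decode (length s) = (n, length t)" by (simp add: s_def)
  ultimately have "(r, s) \<in> uniform_test_code A"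
    using assms t(1) by (simp add: uniform_test_code_def section_nat_def)
  moreover have "\<omega> \<in> cyl s" by (simp add: s_def mem_cyl_iff)
  ultimately show "\<omega> \<in> cyl_union (section_rat (uniform_test_code A) r)"
    unfolding cyl_union_def section_rat_def by blast
qed

lemma super_level_uniform_test_of:
  "{\<omega>. ereal (real_of_rat r) < enn2ereal (uniform_test_of A \<omega>)} =
    cyl_union (section_rat (uniform_test_code A) r)"
proof (intro set_eqI iffI)
  fix \<omega> assume "\<omega> \<in> {\<omega>. ereal (real_of_rat r) < enn2ereal (uniform_test_of A \<omega>)}"
  then obtain n where "real_of_rat r < real n" "\<omega> \<in> test_level A n"
    by (auto simp: less_uniform_test_of_iff)
  with test_level_subset_cyl_union_code
  show "\<omega> \<in> cyl_union (section_rat (uniform_test_code A) r)" by blast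
next
  fix \<omega> assume "\<omega> \<in> cyl_union (section_rat (uniform_test_code A) r)"
  then obtain s where s: "(r, s) \<in> uniform_test_code A" "\<omega> \<in> cyl s"
    unfolding cyl_union_def section_rat_def by blast
  obtain n k where nk: "prod_decode (length s) = (n, k)" by (metis surj_pair)
  then have "k \<le> length s" using snd_prod_decode_le[of "length s"] by simp
  then have \<omega>: "\<omega> \<in> cyl (take k s)" using cyl_subset_cyl_take s(2) by blast
  from s(1) nk have r: "real_of_rat r < real n" and level: "n = 0 \<or> (2 * n, take k s) \<in> A"
    by (simp_all add: uniform_test_code_def)
  have "\<omega> \<in> test_level A n"
  proof (cases "n = 0")
    case False
    with level have "take k s \<in> section_nat A (2 * n)" by (simp add: section_nat_def)
    with False \<omega> show ?thesis unfolding test_level_def cyl_union_def by auto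
  qed simp
  with r show "\<omega> \<in> {\<omega>. ereal (real_of_rat r) < enn2ereal (uniform_test_of A \<omega>)}"
    using less_uniform_test_of_iff by blast
qed

lemma weighted_quarter_le_half_power: "real n * (1/2) ^ (2 * n) \<le> (1/2) ^ Suc n"
proof -
  have "2 * n \<le> (2::nat) ^ n"
  proof (induction n)
    case (Suc n)
    then show ?case using one_less_power[of 2 n] by (cases "n = 0") auto
  qed simp
  then have "2 * real n \<le> 2 ^ n"
    by (metis of_nat_le_iff of_nat_mult of_nat_numeral of_nat_power)
  then have half: "real n * (1/2) ^ n \<le> 1/2"
    by (simp add: field_simps power_divide)
  have "real n * (1/2) ^ (2 * n) = (real n * (1/2) ^ n) * (1/2) ^ n"
    by (simp add: mult_2 power_add)
  also have "\<dots> \<le> 1/2 * (1/2) ^ n" using half by (rule mult_right_mono) simp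
  also have "\<dots> = (1/2) ^ Suc n" by simp
  finally show ?thesis .
qed

lemma nn_integral_uniform_test_of_le:
  assumes fs: "forecasting_system \<phi>" and A: "MLtest \<phi> A" and \<mu>: "\<mu> \<in> M_class \<phi>"
  shows "(\<integral>\<^sup>+ \<omega>. uniform_test_of A \<omega> \<partial>\<mu>) \<le> 1"
proof -
  obtain \<psi> where \<psi>: "precise_fs \<psi>" "\<And>s. \<psi> s \<in> \<phi> s" and \<mu>: "is_mu_of \<psi> \<mu>"
    using \<mu> unfolding M_class_def by blast
  interpret prob_space \<mu> using is_mu_of_prob_space[OF \<mu>] .
  have sets: "test_level A n \<in> sets \<mu>" for n
    using is_mu_of_sets[OF \<mu>] by (simp add: test_level_def)
  have level: "of_nat n * emeasure \<mu> (test_level A n) \<le> ennreal ((1/2) ^ Suc n)" for n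
  proof (cases "n = 0")
    case False
    have "upper_prob \<phi> (cyl_union (section_nat A (2 * n))) \<le> ereal ((1/2) ^ (2 * n))"
      using A by (simp add: MLtest_def)
    from measure_le_upper_prob[OF fs \<psi> \<mu> _ this]
    have "measure \<mu> (test_level A n) \<le> (1/2) ^ (2 * n)"
      using False by (simp add: test_level_def)
    then have "real n * measure \<mu> (test_level A n) \<le> (1/2) ^ Suc n"
      by (intro order_trans[OF mult_left_mono weighted_quarter_le_half_power]) auto
    then show ?thesis
      by (simp add: emeasure_eq_measure ennreal_of_nat_eq_real_of_nat ennreal_mult'[symmetric])
  qed simp
  have term_le: "f n \<le> (\<Sum>i. f i)" for f :: "nat \<Rightarrow> ennreal" and n
    using sum_le_suminf[OF summableI, of "{n}" f] by simp
  have "(\<integral>\<^sup>+ \<omega>. uniform_test_of A \<omega> \<partial>\<mu>) \<le> (\<integral>\<^sup>+ \<omega>. (\<Sum>n. of_nat n * indicator (test_level A n) \<omega>) \<partial>\<mu>)"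
    unfolding uniform_test_of_def by (intro nn_integral_mono SUP_least term_le)
  also have "\<dots> = (\<Sum>n. \<integral>\<^sup>+ \<omega>. of_nat n * indicator (test_level A n) \<omega> \<partial>\<mu>)"
    by (rule nn_integral_suminf) (use sets in measurable)
  also have "\<dots> = (\<Sum>n. of_nat n * emeasure \<mu> (test_level A n))"
    by (simp add: nn_integral_cmult_indicator sets)
  also have "\<dots> \<le> (\<Sum>n. ennreal ((1/2) ^ Suc n))"
    by (intro suminf_le level) auto
  also have "\<dots> = ennreal 1"
    by (rule suminf_ennreal_eq[OF _ power_half_series]) simp
  finally show ?thesis by simp
qed

lemma uniform_test_of_eq_top:
  assumes "\<omega> \<in> (\<Inter>n. cyl_union (section_nat A n))"
  shows "uniform_test_of A \<omega> = \<infinity>"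
proof -
  have "\<omega> \<in> test_level A n" for n
    using assms by (cases "n = 0") (simp_all add: test_level_def[of A n])
  then show ?thesis by (simp add: uniform_test_of_def ennreal_SUP_of_nat_eq_top)
qed

lemma uniformly_random_imp_MLtest_random:
  assumes fs: "forecasting_system \<phi>" and random: "uniformly_random (M_class \<phi>) \<omega>"
  shows "MLtest_random \<phi> \<omega>"
  unfolding MLtest_random_def
proof (intro allI impI notI)
  fix A assume A: "MLtest \<phi> A" and \<omega>: "\<omega> \<in> (\<Inter>n. cyl_union (section_nat A n))"
  have "C_test (M_class \<phi>) (uniform_test_of A)"
    unfolding C_test_def
  proof (intro conjI exI[of _ "uniform_test_code A"] allI ballI)
    show "re_rat_str (uniform_test_code A)"
      using A by (intro re_rat_str_uniform_test_code) (simp add: MLtest_def)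
  qed (simp_all add: super_level_uniform_test_of nn_integral_uniform_test_of_le[OF fs A])
  with random have "uniform_test_of A \<omega> < \<infinity>" unfolding uniformly_random_def by blast
  with uniform_test_of_eq_top[OF \<omega>] show False by simp
qed

theorem theorem7p3:
  fixes \<phi> :: "bool list \<Rightarrow> real set" and \<omega> :: "nat \<Rightarrow> bool"
  assumes "forecasting_system \<phi>" and "computable_fs \<phi>"
  shows "MLtest_random \<phi> \<omega> \<longleftrightarrow> uniformly_random (M_class \<phi>) \<omega>"
  using MLtest_random_imp_uniformly_random[OF assms(1)] uniformly_random_imp_MLtest_random[OF assms(1)]
  by blast

end
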